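(* Let $n$ be an ambient name and $T_1$ a pure mobile-ambient process. Define the binary predicate $\mathcal{P}^{-|open\ n.T_1}(X,Y)$ on pure processes to hold iff there exist a process $P''$ and a name $m\notin fn(X)$ such that $P''\downarrow_m$, $C'[X]\rightsquigarrow P''\rightsquigarrow Y$ and not $Y\downarrow_m$, where $C'[-]=-\mid open\ n.(m[\mathbf{0}]\mid open\ m.T_1)$. Then $\mathcal{P}^{-|open\ n.T_1}$ is stable under $\sim^{BS}_M$, and for all pure processes $P,P'$: $\mathcal{P}^{-|open\ n.T_1}(P,P')$ holds if and only if $P\xrightarrow{-|open\ n.T_1}_{M_I}P'$.
   Context: Mobile ambients (finite, communication-free fragment). Pure processes $P::=\mathbf{0}\mid n[P]\mid M.P\mid(\nu n)P\mid P_1|P_2$, $M::=in\ n\mid out\ n\mid open\ n$; extended processes also allow process variables $X$ and ambients $x[P]$ with name variables $x$ (each variable at most once). Structural congruence $\equiv$: least congruence with $|$ commutative, associative, unit $\mathbf{0}$; $(\nu n)(\nu m)P\equiv(\nu m)(\nu n)P$; $(\nu n)(P|Q)\equiv P|(\nu n)Q$ if $n\notin fn(P)$; $(\nu n)m[P]\equiv m[(\nu n)P]$ if $n\ne m$; $(\nu n)M.P\equiv M.(\nu n)P$ if $n\notin fn(M)$; $\alpha$-conversion. Reduction $\rightsquigarrow$: least relation closed under $\equiv$, $(\nu n)-$, $n[-]$, $-|R$, generated by $n[in\ m.P|Q]|m[R]\rightsquigarrow m[n[P|Q]|R]$, $m[n[out\ m.P|Q]|R]\rightsquigarrow n[P|Q]|m[R]$,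 $open\ n.P|n[Q]\rightsquigarrow P|Q$. Barb $P\downarrow_n$ iff $P\equiv(\nu A)(n[Q]|R)$ with $n\notin A$. Barbed saturated bisimilarity $\sim^{BS}_M$ is the largest symmetric relation $\mathcal{R}$ on pure processes such that if $P\,\mathcal{R}\,Q$ then for every (pure, unary) context $C[-]$ and name $n$: $C[P]\downarrow_n$ implies $C[Q]\downarrow_n$, and $C[P]\rightsquigarrow P'$ implies $C[Q]\rightsquigarrow Q'$ for some $Q'$ with $P'\,\mathcal{R}\,Q'$. A predicate $\mathcal{P}(X,Y)$ is stable under $\mathcal{R}$ if whenever $P\,\mathcal{R}\,Q$ and $\mathcal{P}(P,P')$ there is $Q'$ with $\mathcal{P}(Q,Q')$ and $P'\,\mathcal{R}\,Q'$. The only rule of the transition system $M$ producing labels of shape $-|open\ n.X_1$ is (CoOpen): if $P\equiv(\nu A)(n[P_1]|P_2)$ with $n\notin A$ then $P\xrightarrow{-|open\ n.X_1}(\nu A)(P_1|X_1|P_2)$. $M_I$ instantiates variables: $P\xrightarrow{C[-]}_{M_I}Q$ iff $P\xrightarrow{C_\epsilon[-]}Q_\epsilon$ in $M$ and for some capture-avoiding substitution $\sigma$ of pure processes/names for variables, $Q_\epsilon\sigma\equiv Q$ and $C_\epsilon[-]\sigma=C[-]$. Thus $P\xrightarrow{-|open\ n.T_1}_{M_I}P'$ iff $P\equiv(\nu A)(n[P_1]|P_2)$, $n\notin A$, and $P'\equiv(\nu A)(P_1|T_1|P_2)$ (after $\alpha$-converting $A$ away from $fn(T_1)$). *)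

theory Defs
  imports Main
begin

text \<open>Finite, communication-free mobile ambients. Names are natural numbers
(an infinite supply of names).\<close>

type_synonym name = nat

datatype cap = In name | Out name | Open name

datatype proc =
    Nil
  | Amb name proc
  | Pre cap proc
  | Res name proc
  | Par proc proc

fun fn_cap :: "cap \<Rightarrow> name set" where
  "fn_cap (In n) = {n}"
| "fn_cap (Out n) = {n}"
| "fn_cap (Open n) = {n}"

fun fn :: "proc \<Rightarrow> name set" where
  "fn Nil = {}"
| "fn (Amb n P) = insert n (fn P)"
| "fn (Pre M P) = fn_cap M \<union> fn P"
| "fn (Res n P) = fn P - {n}"
| "fn (Par P Q) = fn P \<union> fn Q"

definition swp :: "name \<Rightarrow> name \<Rightarrow> name \<Rightarrow> name" where
  "swp a b c = (if c = a then b else if c = b then a else c)"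

fun swap_cap :: "name \<Rightarrow> name \<Rightarrow> cap \<Rightarrow> cap" where
  "swap_cap a b (In n) = In (swp a b n)"
| "swap_cap a b (Out n) = Out (swp a b n)"
| "swap_cap a b (Open n) = Open (swp a b n)"

text \<open>Name transposition (applied to all occurrences, binders included);
used to express alpha-conversion.\<close>
fun swap :: "name \<Rightarrow> name \<Rightarrow> proc \<Rightarrow> proc" where
  "swap a b Nil = Nil"
| "swap a b (Amb n P) = Amb (swp a b n) (swap a b P)"
| "swap a b (Pre M P) = Pre (swap_cap a b M) (swap a b P)"
| "swap a b (Res n P) = Res (swp a b n) (swap a b P)"
| "swap a b (Par P Q) = Par (swap a b P) (swap a b Q)"

fun resl :: "name list \<Rightarrow> proc \<Rightarrow> proc" where
  "resl [] P = P"
| "resl (a # A) P = Res a (resl A P)"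

inductive scong :: "proc \<Rightarrow> proc \<Rightarrow> bool" where
  sc_refl: "scong P P"
| sc_sym: "scong P Q \<Longrightarrow> scong Q P"
| sc_trans: "scong P Q \<Longrightarrow> scong Q R \<Longrightarrow> scong P R"
| sc_amb: "scong P Q \<Longrightarrow> scong (Amb n P) (Amb n Q)"
| sc_pre: "scong P Q \<Longrightarrow> scong (Pre M P) (Pre M Q)"
| sc_res: "scong P Q \<Longrightarrow> scong (Res n P) (Res n Q)"
| sc_par: "scong P P' \<Longrightarrow> scong Q Q' \<Longrightarrow> scong (Par P Q) (Par P' Q')"
| sc_par_comm: "scong (Par P Q) (Par Q P)"
| sc_par_assoc: "scong (Par (Par P Q) R) (Par P (Par Q R))"
| sc_par_nil: "scong (Par P Nil) P"
| sc_res_res: "scong (Res n (Res m P)) (Res m (Res n P))"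
| sc_res_par: "n \<notin> fn P \<Longrightarrow> scong (Res n (Par P Q)) (Par P (Res n Q))"
| sc_res_amb: "n \<noteq> m \<Longrightarrow> scong (Res n (Amb m P)) (Amb m (Res n P))"
| sc_res_pre: "n \<notin> fn_cap M \<Longrightarrow> scong (Res n (Pre M P)) (Pre M (Res n P))"
| sc_alpha: "m \<notin> fn P \<Longrightarrow> scong (Res n P) (Res m (swap n m P))"

inductive red :: "proc \<Rightarrow> proc \<Rightarrow> bool" where
  red_in: "red (Par (Amb n (Par (Pre (In m) P) Q)) (Amb m R))
               (Amb m (Par (Amb n (Par P Q)) R))"
| red_out: "red (Amb m (Par (Amb n (Par (Pre (Out m) P) Q)) R))
                (Par (Amb n (Par P Q)) (Amb m R))"
| red_open: "red (Par (Pre (Open n) P) (Amb n Q)) (Par P Q)"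
| red_res: "red P Q \<Longrightarrow> red (Res n P) (Res n Q)"
| red_amb: "red P Q \<Longrightarrow> red (Amb n P) (Amb n Q)"
| red_par: "red P Q \<Longrightarrow> red (Par P R) (Par Q R)"
| red_scong: "scong P P' \<Longrightarrow> red P' Q' \<Longrightarrow> scong Q' Q \<Longrightarrow> red P Q"

definition barb :: "proc \<Rightarrow> name \<Rightarrow> bool" where
  "barb P n \<longleftrightarrow> (\<exists>A Q R. scong P (resl A (Par (Amb n Q) R)) \<and> n \<notin> set A)"

text \<open>Pure unary contexts (exactly one hole); filling may capture names.\<close>
datatype ctx =
    Hole
  | CAmb name ctx
  | CPre cap ctx
  | CRes name ctx
  | CParL ctx proc
  | CParR proc ctx

fun fill :: "ctx \<Rightarrow> proc \<Rightarrow> proc" where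
  "fill Hole P = P"
| "fill (CAmb n C) P = Amb n (fill C P)"
| "fill (CPre M C) P = Pre M (fill C P)"
| "fill (CRes n C) P = Res n (fill C P)"
| "fill (CParL C Q) P = Par (fill C P) Q"
| "fill (CParR Q C) P = Par Q (fill C P)"

definition bs_bisimulation :: "(proc \<Rightarrow> proc \<Rightarrow> bool) \<Rightarrow> bool" where
  "bs_bisimulation R \<longleftrightarrow>
     (\<forall>P Q. R P Q \<longrightarrow> R Q P) \<and>
     (\<forall>P Q. R P Q \<longrightarrow>
        (\<forall>C n. barb (fill C P) n \<longrightarrow> barb (fill C Q) n) \<and>
        (\<forall>C P'. red (fill C P) P' \<longrightarrow> (\<exists>Q'. red (fill C Q) Q' \<and> R P' Q')))"

definition bs_bisim :: "proc \<Rightarrow> proc \<Rightarrow> bool" where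
  "bs_bisim P Q \<longleftrightarrow> (\<exists>R. bs_bisimulation R \<and> R P Q)"

definition stable :: "(proc \<Rightarrow> proc \<Rightarrow> bool) \<Rightarrow> (proc \<Rightarrow> proc \<Rightarrow> bool) \<Rightarrow> bool" where
  "stable Pr R \<longleftrightarrow> (\<forall>P Q P'. R P Q \<longrightarrow> Pr P P' \<longrightarrow> (\<exists>Q'. Pr Q Q' \<and> R P' Q'))"

definition Popen :: "name \<Rightarrow> proc \<Rightarrow> proc \<Rightarrow> proc \<Rightarrow> bool" where
  "Popen n T1 X Y \<longleftrightarrow>
     (\<exists>P'' m. m \<notin> fn X \<and> barb P'' m \<and>
        red (fill (CParL Hole (Pre (Open n) (Par (Amb m Nil) (Pre (Open m) T1)))) X) P'' \<and>
        red P'' Y \<and> \<not> barb Y m)"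

text \<open>Transition P --(-|open n.T1)-->_{M_I} P': rule (CoOpen) of M, with the
process variable X1 instantiated (capture-avoidingly) by T1.\<close>
definition coopen_MI :: "name \<Rightarrow> proc \<Rightarrow> proc \<Rightarrow> proc \<Rightarrow> bool" where
  "coopen_MI n T1 P P' \<longleftrightarrow>
     (\<exists>A P1 P2. scong P (resl A (Par (Amb n P1) P2)) \<and> n \<notin> set A \<and>
        set A \<inter> fn T1 = {} \<and>
        scong P' (resl A (Par (Par P1 T1) P2)))"

end

theory Submission
  imports Defs
begin

text \<open>
  For a name \<open>m\<close> fresh for \<open>P\<close>, the probe \<open>open n.(m[0] | open m.T1)\<close> can first open an
  ambient \<open>n\<close> of \<open>P\<close>, exposing the barb \<open>m\<close>, and then consume \<open>m[0]\<close>, releasing \<open>T1\<close>: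
  this gives the co-open transitions as instances of the predicate, and stability follows by
  choosing \<open>m\<close> fresh for the bisimilar process as well.

  Conversely, as \<open>m\<close> is fresh for \<open>P\<close>, the barb \<open>m\<close> can only appear when the probe's prefix
  opens an ambient \<open>n\<close> of \<open>P\<close>, and can only disappear again when \<open>open m\<close> consumes \<open>m[0]\<close>.
  To track which thread takes part in a reduction through structural congruence, a process
  is cut into one thread and the rest; such cuts transfer along \<open>\<equiv>\<close> up to vacuous
  restrictions, whose number is accounted for separately so that the resulting
  decompositions hold exactly up to \<open>\<equiv>\<close>.
\<close>

section \<open>Name transpositions\<close>

lemma swp_simps [simp]:
  "swp a b a = b" "swp a b b = a" "c \<noteq> a \<Longrightarrow> c \<noteq> b \<Longrightarrow> swp a b c = c"
  by (auto simp: swp_def)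

lemma swp_swp [simp]: "swp a b (swp a b c) = c"
  by (auto simp: swp_def)

lemma swp_eq_swp_iff [simp]: "swp a b x = swp a b y \<longleftrightarrow> x = y"
  by (auto simp: swp_def)

lemma swp_self [simp]: "swp a a c = c"
  by (auto simp: swp_def)

lemma swp_commute: "swp a b = swp b a"
  by (auto simp: swp_def fun_eq_iff)

lemma swp_in_image_swp [simp]: "swp a b x \<in> swp a b ` S \<longleftrightarrow> x \<in> S"
  by auto

lemma swap_cap_swap_cap [simp]: "swap_cap a b (swap_cap a b M) = M"
  by (cases M) auto

lemma swap_swap [simp]: "swap a b (swap a b P) = P"
  by (induction P) auto

lemma swap_cap_commute: "swap_cap a b M = swap_cap b a M"
  by (cases M) (auto simp: swp_commute)

lemma swap_cap_self [simp]: "swap_cap a a M = M"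
  by (cases M) auto

lemma swap_self [simp]: "swap a a P = P"
  by (induction P) auto

lemma swap_commute: "swap a b P = swap b a P"
  by (induction P) (auto simp: swp_commute swap_cap_commute)

lemma size_swap [simp]: "size (swap a b P) = size P"
  by (induction P) auto

lemma fn_cap_swap [simp]: "fn_cap (swap_cap a b M) = swp a b ` fn_cap M"
  by (cases M) auto

lemma fn_swap [simp]: "fn (swap a b P) = swp a b ` fn P"
  by (induction P) (auto simp: image_Un image_set_diff inj_on_def)

lemma finite_fn_cap [simp]: "finite (fn_cap M)"
  by (cases M) auto

lemma finite_fn [simp]: "finite (fn P)"
  by (induction P) auto

lemma swap_cap_fresh: "a \<notin> fn_cap M \<Longrightarrow> b \<notin> fn_cap M \<Longrightarrow> swap_cap a b M = M"
  by (cases M) auto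

lemma fresh_name: "finite (S :: name set) \<Longrightarrow> \<exists>x. x \<notin> S"
  using ex_new_if_finite[OF infinite_UNIV_nat] by blast

lemma swp_image_alpha: "m \<notin> fn P \<Longrightarrow> S \<subseteq> fn P \<Longrightarrow> swp n m ` S - {m} = S - {n}"
  by (auto simp: swp_def split: if_splits)


section \<open>Structural congruence\<close>

declare sc_trans [trans]

lemma scong_fn: "scong P Q \<Longrightarrow> fn P = fn Q"
  by (induction rule: scong.induct) (auto simp: swp_image_alpha)

lemma swap_fresh_scong: "a \<notin> fn P \<Longrightarrow> b \<notin> fn P \<Longrightarrow> scong (swap a b P) P"
proof (induction P)
  case (Res c Q)
  consider "a = b" | "a \<noteq> b" "c = a" | "a \<noteq> b" "c = b" | "c \<noteq> a" "c \<noteq> b"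
    by blast
  then show ?case
  proof cases
    case 2
    then have "scong (Res a Q) (Res b (swap a b Q))"
      using Res.prems by (intro sc_alpha) auto
    then show ?thesis using 2 by (simp add: sc_sym)
  next
    case 3
    then have "scong (Res b Q) (Res a (swap b a Q))"
      using Res.prems by (intro sc_alpha) auto
    then show ?thesis using 3 by (simp add: sc_sym swap_commute)
  qed (use Res in \<open>auto intro: sc_res sc_refl\<close>)
qed (auto simp: swap_cap_fresh intro: sc_refl sc_amb sc_pre sc_par)

lemma sc_par_assoc': "scong (Par P (Par Q R)) (Par (Par P Q) R)"
  by (rule sc_sym, rule sc_par_assoc)

lemma sc_par_nil': "scong P (Par P Nil)"
  by (rule sc_sym, rule sc_par_nil)

lemma sc_nil_par: "scong (Par Nil P) P"
  by (meson sc_par_comm sc_par_nil sc_trans)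

lemma sc_parL: "scong P P' \<Longrightarrow> scong (Par P Q) (Par P' Q)"
  by (simp add: sc_par sc_refl)

lemma sc_parR: "scong Q Q' \<Longrightarrow> scong (Par P Q) (Par P Q')"
  by (simp add: sc_par sc_refl)

lemma sc_res_par': "n \<notin> fn Q \<Longrightarrow> scong (Res n (Par P Q)) (Par (Res n P) Q)"
  by (meson sc_par_comm sc_res sc_res_par sc_trans)

lemma sc_par_right_commute: "scong (Par (Par P Q) R) (Par (Par P R) Q)"
  by (meson sc_par_assoc sc_par_assoc' sc_par_comm sc_parR sc_trans)

lemma sc_par_exchange: "scong (Par (Par P Q) (Par R S)) (Par (Par P R) (Par Q S))"
  by (meson sc_par_assoc sc_par_assoc' sc_par_right_commute sc_parL sc_trans)

lemma fn_resl [simp]: "fn (resl A P) = fn P - set A"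
  by (induction A) auto

lemma resl_cong: "scong P Q \<Longrightarrow> scong (resl A P) (resl A Q)"
  by (induction A) (auto intro: sc_res)

lemma red_resl: "red P Q \<Longrightarrow> red (resl A P) (resl A Q)"
  by (induction A) (auto intro: red_res)

lemma swap_resl: "swap a b (resl A P) = resl (map (swp a b) A) (swap a b P)"
  by (induction A) auto

lemma resl_par_extrude: "set A \<inter> fn R = {} \<Longrightarrow> scong (Par (resl A P) R) (resl A (Par P R))"
proof (induction A)
  case (Cons a A)
  then have "scong (Par (resl (a # A) P) R) (Res a (Par (resl A P) R))"
    by (simp add: sc_sym sc_res_par')
  also have "scong \<dots> (Res a (resl A (Par P R)))"
    using Cons by (simp add: sc_res)
  finally show ?case by simp
qed (simp add: sc_refl)

lemma resl_par_extrude': "set A \<inter> fn R = {} \<Longrightarrow> scong (Par R (resl A P)) (resl A (Par R P))"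
  by (meson resl_cong resl_par_extrude sc_par_comm sc_trans)

lemma Res_resl_commute: "j \<notin> set A \<Longrightarrow> scong (Res j (resl A P)) (resl A (Res j P))"
  by (induction A) (auto intro: sc_refl sc_trans[OF sc_res_res] sc_res)

lemma resl_Pre: "set A \<inter> fn_cap M = {} \<Longrightarrow> scong (resl A (Pre M P)) (Pre M (resl A P))"
  by (induction A) (auto intro: sc_refl sc_trans[OF sc_res] sc_res_pre)


section \<open>Invariants of structural congruence\<close>

fun top_ambs :: "proc \<Rightarrow> name set" where
  "top_ambs Nil = {}"
| "top_ambs (Amb k P) = {k}"
| "top_ambs (Pre M P) = {}"
| "top_ambs (Res j P) = top_ambs P - {j}"
| "top_ambs (Par P Q) = top_ambs P \<union> top_ambs Q"

fun unguarded_ambs :: "proc \<Rightarrow> name set" where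
  "unguarded_ambs Nil = {}"
| "unguarded_ambs (Amb k P) = insert k (unguarded_ambs P)"
| "unguarded_ambs (Pre M P) = {}"
| "unguarded_ambs (Res j P) = unguarded_ambs P - {j}"
| "unguarded_ambs (Par P Q) = unguarded_ambs P \<union> unguarded_ambs Q"

fun threads :: "proc \<Rightarrow> nat" where
  "threads Nil = 0"
| "threads (Amb k P) = 1"
| "threads (Pre M P) = 1"
| "threads (Res j P) = threads P"
| "threads (Par P Q) = threads P + threads Q"

fun amb_threads :: "proc \<Rightarrow> nat" where
  "amb_threads Nil = 0"
| "amb_threads (Amb k P) = 1"
| "amb_threads (Pre M P) = 0"
| "amb_threads (Res j P) = amb_threads P"
| "amb_threads (Par P Q) = amb_threads P + amb_threads Q"

fun weight :: "proc \<Rightarrow> nat" where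
  "weight Nil = 0"
| "weight (Amb k P) = Suc (weight P)"
| "weight (Pre M P) = Suc (weight P)"
| "weight (Res j P) = weight P"
| "weight (Par P Q) = weight P + weight Q"

fun garbage :: "proc \<Rightarrow> nat" where
  "garbage Nil = 0"
| "garbage (Amb k P) = garbage P"
| "garbage (Pre M P) = garbage P"
| "garbage (Res j P) = (if j \<in> fn P then 0 else 1) + garbage P"
| "garbage (Par P Q) = garbage P + garbage Q"

fun prune :: "proc \<Rightarrow> proc" where
  "prune Nil = Nil"
| "prune (Amb k P) = Amb k (prune P)"
| "prune (Pre M P) = Pre M (prune P)"
| "prune (Res j P) = (if j \<in> fn P then Res j (prune P) else prune P)"
| "prune (Par P Q) = Par (prune P) (prune Q)"

lemma top_ambs_fn: "top_ambs P \<subseteq> fn P"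
  by (induction P) auto

lemma unguarded_ambs_fn: "unguarded_ambs P \<subseteq> fn P"
  by (induction P) auto

lemma top_ambs_unguarded: "top_ambs P \<subseteq> unguarded_ambs P"
  by (induction P) auto

lemma weight_0_fn: "weight P = 0 \<Longrightarrow> fn P = {}"
  by (induction P) auto

lemma weight_0_top_ambs: "weight P = 0 \<Longrightarrow> top_ambs P = {}"
  using weight_0_fn top_ambs_fn by blast

lemma threads_0_weight: "threads P = 0 \<Longrightarrow> weight P = 0"
  by (induction P) auto

lemma top_ambs_resl: "top_ambs (resl A P) = top_ambs P - set A"
  by (induction A) auto

lemma threads_resl [simp]: "threads (resl A P) = threads P"
  by (induction A) auto

lemma top_ambs_weight_1: "weight P \<le> 1 \<Longrightarrow> x \<in> top_ambs P \<Longrightarrow> top_ambs P = {x}"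
proof (induction P)
  case (Par P Q)
  then show ?case
    using weight_0_top_ambs[of P] weight_0_top_ambs[of Q] by (cases "weight P = 0") auto
qed auto

lemma top_ambs_swap [simp]: "top_ambs (swap a b P) = swp a b ` top_ambs P"
  by (induction P) (auto simp: image_Un image_set_diff inj_on_def)

lemma unguarded_ambs_swap [simp]: "unguarded_ambs (swap a b P) = swp a b ` unguarded_ambs P"
  by (induction P) (auto simp: image_Un image_set_diff inj_on_def)

lemma counts_swap [simp]:
  "threads (swap a b P) = threads P" "amb_threads (swap a b P) = amb_threads P"
  "weight (swap a b P) = weight P" "garbage (swap a b P) = garbage P"
  by (induction P) auto

lemma prune_swap [simp]: "prune (swap a b P) = swap a b (prune P)"
  by (induction P) auto

lemma fn_prune [simp]: "fn (prune P) = fn P"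
  by (induction P) auto

lemma counts_prune [simp]:
  "threads (prune P) = threads P" "amb_threads (prune P) = amb_threads P"
  "weight (prune P) = weight P" "garbage (prune P) = 0" "prune (prune P) = prune P"
  by (induction P) auto

lemma top_ambs_prune [simp]: "top_ambs (prune P) = top_ambs P"
  by (induction P) (use top_ambs_fn in auto)

lemma scong_counts:
  "scong P Q \<Longrightarrow> threads P = threads Q \<and> amb_threads P = amb_threads Q \<and>
     weight P = weight Q \<and> garbage P = garbage Q"
proof (induction rule: scong.induct)
  case (sc_alpha m P n)
  then have "m \<in> swp n m ` fn P \<longleftrightarrow> n \<in> fn P"
    by (auto simp: swp_def split: if_splits)
  then show ?case by simp
qed (auto dest: scong_fn)

lemma scong_top_ambs: "scong P Q \<Longrightarrow> top_ambs P = top_ambs Q"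
proof (induction rule: scong.induct)
  case (sc_alpha m P n)
  then show ?case using swp_image_alpha[OF sc_alpha top_ambs_fn] by simp
qed (use top_ambs_fn in auto)

lemma scong_unguarded_ambs: "scong P Q \<Longrightarrow> unguarded_ambs P = unguarded_ambs Q"
proof (induction rule: scong.induct)
  case (sc_alpha m P n)
  then show ?case using swp_image_alpha[OF sc_alpha unguarded_ambs_fn] by simp
qed (use unguarded_ambs_fn in auto)

lemma scong_prune: "scong P Q \<Longrightarrow> scong (prune P) (prune Q)"
proof (induction rule: scong.induct)
  case (sc_res P Q n)
  then show ?case using scong_fn[OF sc_res(1)] by (simp add: scong.sc_res)
next
  case (sc_alpha m P n)
  have iff: "m \<in> swp n m ` fn P \<longleftrightarrow> n \<in> fn P"
    using sc_alpha by (auto simp: swp_def split: if_splits)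
  show ?case
  proof (cases "n \<in> fn P")
    case False
    then have "scong (swap n m (prune P)) (prune P)"
      using sc_alpha by (intro swap_fresh_scong) auto
    then show ?thesis using iff False by (simp add: scong.sc_sym)
  qed (use iff sc_alpha in \<open>simp add: scong.sc_alpha\<close>)
qed (auto intro: scong.intros)

fun vacuous :: "nat \<Rightarrow> proc" where
  "vacuous 0 = Nil"
| "vacuous (Suc k) = Res 0 (vacuous k)"

lemma vacuous_simps [simp]:
  "fn (vacuous k) = {}" "garbage (vacuous k) = k" "prune (vacuous k) = Nil"
  "weight (vacuous k) = 0" "threads (vacuous k) = 0"
  by (induction k) auto

lemma vacuous_add: "scong (Par (vacuous a) (vacuous b)) (vacuous (a + b))"
proof (induction a)
  case (Suc a)
  have "scong (Par (vacuous (Suc a)) (vacuous b)) (Res 0 (Par (vacuous a) (vacuous b)))"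
    by (simp add: sc_sym sc_res_par')
  also have "scong \<dots> (Res 0 (vacuous (a + b)))"
    using Suc by (rule sc_res)
  finally show ?case by simp
qed (simp add: sc_nil_par)

lemma scong_extrude_weightless:
  assumes cong: "\<And>P Q. scong P Q \<Longrightarrow> scong (E P) (E Q)"
    and res: "\<And>x P. x \<notin> N \<Longrightarrow> scong (Res x (E P)) (E (Res x P))"
    and fn_E: "\<And>P. fn (E P) \<subseteq> N \<union> fn P"
    and "finite N" and "weight g = 0"
  shows "scong (E (Par Q g)) (Par (E Q) g)"
  using \<open>weight g = 0\<close>
proof (induction g arbitrary: Q rule: measure_induct_rule[where f = size])
  case (less g)
  show ?case
  proof (cases g)
    case Nil
    then show ?thesis by (meson cong sc_par_nil sc_par_nil' sc_trans)
  next
    case (Par g1 g2)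
    have "scong (E (Par Q g)) (E (Par (Par Q g1) g2))"
      using Par by (simp add: cong sc_par_assoc')
    also have "scong \<dots> (Par (E (Par Q g1)) g2)"
      using less Par by simp
    also have "scong \<dots> (Par (Par (E Q) g1) g2)"
      using less Par by (simp add: sc_parL)
    also have "scong \<dots> (Par (E Q) g)"
      using Par by (simp add: sc_par_assoc)
    finally show ?thesis .
  next
    case (Res j g')
    obtain x where x: "x \<notin> N \<union> fn Q"
      using fresh_name \<open>finite N\<close> by (metis finite_Un finite_fn)
    define g'' where "g'' = swap j x g'"
    have g'': "weight g'' = 0" "size g'' < size g"
      using less Res by (auto simp: g''_def)
    have alpha: "scong g (Res x g'')"
      using Res weight_0_fn less.prems unfolding g''_def by (simp add: sc_alpha)
    have x_EQ: "x \<notin> fn (E Q)" using x fn_E by blast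
    have "scong (E (Par Q g)) (E (Res x (Par Q g'')))"
      using alpha x by (meson cong sc_parR sc_res_par sc_sym sc_trans UnCI)
    also have "scong \<dots> (Res x (E (Par Q g'')))"
      using x res by (simp add: sc_sym)
    also have "scong \<dots> (Res x (Par (E Q) g''))"
      using less g'' by (simp add: sc_res)
    also have "scong \<dots> (Par (E Q) g)"
      using x_EQ alpha by (meson sc_parR sc_res_par sc_sym sc_trans)
    finally show ?thesis .
  qed (use less in auto)
qed

lemma scong_prune_vacuous: "scong P (Par (prune P) (vacuous (garbage P)))"
proof (induction P)
  case (Amb k P)
  have "scong (Amb k P) (Amb k (Par (prune P) (vacuous (garbage P))))"
    using Amb by (rule sc_amb)
  also have "scong \<dots> (Par (Amb k (prune P)) (vacuous (garbage P)))"
    by (rule scong_extrude_weightless[where N = "{k}"]) (auto intro: sc_amb sc_res_amb)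
  finally show ?case by simp
next
  case (Pre M P)
  have "scong (Pre M P) (Pre M (Par (prune P) (vacuous (garbage P))))"
    using Pre by (rule sc_pre)
  also have "scong \<dots> (Par (Pre M (prune P)) (vacuous (garbage P)))"
    by (rule scong_extrude_weightless[where N = "fn_cap M"]) (auto intro: sc_pre sc_res_pre)
  finally show ?case by simp
next
  case (Par P Q)
  have "scong (Par P Q)
      (Par (Par (prune P) (vacuous (garbage P))) (Par (prune Q) (vacuous (garbage Q))))"
    using Par by (rule sc_par)
  also have "scong \<dots> (Par (Par (prune P) (prune Q)) (vacuous (garbage P + garbage Q)))"
    by (meson sc_par_exchange sc_parR vacuous_add sc_trans)
  finally show ?case by simp
next
  case (Res j P)
  show ?case
  proof (cases "j \<in> fn P")
    case True
    have "scong (Res j P) (Res j (Par (prune P) (vacuous (garbage P))))"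
      using Res by (rule sc_res)
    also have "scong \<dots> (Par (Res j (prune P)) (vacuous (garbage P)))"
      by (rule sc_res_par') simp
    finally show ?thesis using True by simp
  next
    case False
    have "scong (Res j P) (Par P (Res j Nil))"
      using False by (meson sc_par_nil' sc_res sc_res_par sc_trans)
    also have "scong \<dots> (Par P (vacuous 1))"
      using sc_alpha[of 0 Nil j] by (simp add: sc_parR)
    also have "scong \<dots> (Par (Par (prune P) (vacuous (garbage P))) (vacuous 1))"
      using Res by (rule sc_parL)
    also have "scong \<dots> (Par (prune P) (vacuous (garbage P + 1)))"
      by (meson sc_par_assoc sc_parR vacuous_add sc_trans)
    finally show ?thesis using False by simp
  qed
qed (simp add: sc_par_nil')

lemma prune_weight_0: "weight P = 0 \<Longrightarrow> scong (prune P) Nil"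
proof (induction P)
  case (Par P Q)
  then show ?case by (simp add: sc_trans[OF sc_par sc_par_nil])
qed (auto simp: sc_refl dest: weight_0_fn)

definition pcong :: "proc \<Rightarrow> proc \<Rightarrow> bool" where
  "pcong X Y \<longleftrightarrow> scong (prune X) (prune Y)"

lemma pcong_refl [simp]: "pcong X X"
  by (simp add: pcong_def sc_refl)

lemma pcong_sym: "pcong X Y \<Longrightarrow> pcong Y X"
  by (simp add: pcong_def sc_sym)

lemma pcong_trans [trans]: "pcong X Y \<Longrightarrow> pcong Y Z \<Longrightarrow> pcong X Z"
  unfolding pcong_def by (rule sc_trans)

lemma scong_pcong: "scong X Y \<Longrightarrow> pcong X Y"
  by (simp add: pcong_def scong_prune)

lemma pcong_scong_trans [trans]: "pcong X Y \<Longrightarrow> scong Y Z \<Longrightarrow> pcong X Z"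
  using pcong_trans scong_pcong by blast

lemma scong_pcong_trans [trans]: "scong X Y \<Longrightarrow> pcong Y Z \<Longrightarrow> pcong X Z"
  using pcong_trans scong_pcong by blast

lemma pcong_fn: "pcong X Y \<Longrightarrow> fn X = fn Y"
  unfolding pcong_def by (metis scong_fn fn_prune)

lemma pcong_top_ambs: "pcong X Y \<Longrightarrow> top_ambs X = top_ambs Y"
  unfolding pcong_def by (metis scong_top_ambs top_ambs_prune)

lemma pcong_counts:
  "pcong X Y \<Longrightarrow> threads X = threads Y \<and> amb_threads X = amb_threads Y \<and> weight X = weight Y"
  unfolding pcong_def by (metis scong_counts counts_prune)

lemma pcong_Par: "pcong X X' \<Longrightarrow> pcong Y Y' \<Longrightarrow> pcong (Par X Y) (Par X' Y')"
  by (simp add: pcong_def sc_par)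

lemma pcong_Amb: "pcong X Y \<Longrightarrow> pcong (Amb k X) (Amb k Y)"
  by (simp add: pcong_def sc_amb)

lemma pcong_Res: "pcong X Y \<Longrightarrow> pcong (Res j X) (Res j Y)"
  using pcong_fn[of X Y] by (simp add: pcong_def sc_res)

lemma pcong_resl: "pcong X Y \<Longrightarrow> pcong (resl A X) (resl A Y)"
  by (induction A) (auto intro: pcong_Res)

lemma pcong_prune: "pcong (prune X) X"
  by (simp add: pcong_def sc_refl)

lemma pcong_Res_fresh: "j \<notin> fn P \<Longrightarrow> pcong (Res j P) P"
  by (simp add: pcong_def sc_refl)

lemma pcong_weight_0: "weight P = 0 \<Longrightarrow> pcong P Nil"
  by (simp add: pcong_def prune_weight_0)

lemma pcong_par_weightless: "weight g = 0 \<Longrightarrow> pcong (Par X g) X"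
  unfolding pcong_def by (simp, meson prune_weight_0 sc_par_nil sc_parR sc_trans)

lemma pcong_par_weightless': "weight g = 0 \<Longrightarrow> pcong (Par g X) X"
  by (meson pcong_par_weightless pcong_trans sc_par_comm scong_pcong)

lemma pcong_garbage_scong: "pcong X Y \<Longrightarrow> garbage X = garbage Y \<Longrightarrow> scong X Y"
  by (metis pcong_def sc_parL sc_sym sc_trans scong_prune_vacuous)

lemma pcong_resl_filter:
  "\<forall>a\<in>set A. a \<in> fn D \<longleftrightarrow> p a \<Longrightarrow> pcong (resl A D) (resl (filter p (remdups A)) D)"
proof (induction A)
  case (Cons a A)
  then have IH: "pcong (resl A D) (resl (filter p (remdups A)) D)"
    by auto
  show ?case
  proof (cases "a \<notin> set A \<and> p a")
    case True
    then show ?thesis using IH by (simp add: pcong_Res)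
  next
    case False
    then have "pcong (Res a (resl A D)) (resl A D)"
      using Cons.prems by (intro pcong_Res_fresh) auto
    then show ?thesis using IH False by (auto intro: pcong_trans)
  qed
qed simp

lemma garbage_resl_shift:
  "\<forall>a\<in>set A. a \<in> fn D1 \<longleftrightarrow> a \<in> fn D2 \<Longrightarrow>
     garbage (resl A D1) + garbage D2 = garbage (resl A D2) + garbage D1"
proof (induction A)
  case (Cons a A)
  then have "a \<in> fn D1 - set A \<longleftrightarrow> a \<in> fn D2 - set A" by auto
  then show ?case using Cons by auto
qed simp

lemma garbage_resl_useful: "distinct A \<Longrightarrow> set A \<subseteq> fn D \<Longrightarrow> garbage (resl A D) = garbage D"
  by (induction A) auto


section \<open>Injectivity of prefixes\<close>

text \<open>\<open>prefix_view P = Some (M, B)\<close> when the only thread of \<open>P\<close> is a prefix; the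
  prefix is then \<open>M\<close> and \<open>B\<close> gathers its continuation and the weightless rest.\<close>

fun prefix_view :: "proc \<Rightarrow> (cap \<times> proc) option" where
  "prefix_view Nil = None"
| "prefix_view (Amb k P) = None"
| "prefix_view (Pre M P) = Some (M, P)"
| "prefix_view (Res j P) =
     (case prefix_view P of
        None \<Rightarrow> None
      | Some (M, B) \<Rightarrow> if j \<in> fn_cap M then None else Some (M, Res j B))"
| "prefix_view (Par P Q) =
     (if threads Q = 0
      then (case prefix_view P of None \<Rightarrow> None | Some (M, B) \<Rightarrow> Some (M, Par B Q))
      else if threads P = 0
      then (case prefix_view Q of None \<Rightarrow> None | Some (M, B) \<Rightarrow> Some (M, Par P B))
      else None)"

definition same_prefix :: "(cap \<times> proc) option \<Rightarrow> (cap \<times> proc) option \<Rightarrow> bool" where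
  "same_prefix v w \<longleftrightarrow>
     v = None \<and> w = None \<or> (\<exists>M B B'. v = Some (M, B) \<and> w = Some (M, B') \<and> scong B B')"

lemma same_prefix_refl: "same_prefix v v"
  by (cases v) (auto simp: same_prefix_def sc_refl)

lemma same_prefix_sym: "same_prefix v w \<Longrightarrow> same_prefix w v"
  by (auto simp: same_prefix_def sc_sym)

lemma same_prefix_trans: "same_prefix u v \<Longrightarrow> same_prefix v w \<Longrightarrow> same_prefix u w"
  by (auto simp: same_prefix_def intro: sc_trans)

lemma prefix_view_threads: "prefix_view P = Some x \<Longrightarrow> threads P = 1"
  by (induction P arbitrary: x) (auto split: option.splits if_splits)

lemma prefix_view_threads_0: "threads P = 0 \<Longrightarrow> prefix_view P = None"
  using prefix_view_threads by (metis not_None_eq zero_neq_one)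

lemma prefix_view_fn: "prefix_view P = Some (M, B) \<Longrightarrow> fn P = fn_cap M \<union> fn B"
  by (induction P arbitrary: M B) (auto split: option.splits if_splits)

lemma prefix_view_swap:
  "prefix_view (swap a b P) = map_option (\<lambda>(M, B). (swap_cap a b M, swap a b B)) (prefix_view P)"
  by (induction P) (auto split: option.splits if_splits)

lemma scong_prefix_view: "scong P Q \<Longrightarrow> same_prefix (prefix_view P) (prefix_view Q)"
proof (induction rule: scong.induct)
  case (sc_refl P)
  then show ?case by (rule same_prefix_refl)
next
  case (sc_sym P Q)
  then show ?case by (blast intro: same_prefix_sym)
next
  case (sc_trans P Q R)
  then show ?case by (blast intro: same_prefix_trans)
next
  case (sc_res P Q n)
  then show ?case unfolding same_prefix_def using scong.sc_res by (auto split: option.splits)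
next
  case (sc_par P P' Q Q')
  have "threads P = threads P'" "threads Q = threads Q'"
    using sc_par(1,2) scong_counts by auto
  then show ?case using sc_par
    by (auto simp: same_prefix_def intro: scong.sc_par split: option.splits)
next
  case (sc_par_comm P Q)
  show ?case
    by (auto simp: same_prefix_def scong.sc_refl scong.sc_par_comm prefix_view_threads_0
        split: option.splits)
next
  case (sc_par_assoc P Q R)
  show ?case
    by (auto simp: same_prefix_def scong.sc_refl prefix_view_threads_0 scong.sc_par_assoc
        sc_par_assoc' dest: prefix_view_threads split: option.splits)
next
  case (sc_par_nil P)
  then show ?case by (auto simp: same_prefix_def scong.sc_par_nil split: option.splits)
next
  case (sc_res_res n m P)
  then show ?case
    by (auto simp: same_prefix_def scong.sc_refl intro: scong.sc_res_res split: option.splits)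
next
  case (sc_res_par n P Q)
  then show ?case using prefix_view_fn[of P] prefix_view_fn[of Q]
    by (auto simp: same_prefix_def scong.sc_refl prefix_view_threads_0
        intro: scong.sc_res_par sc_res_par' split: option.splits)
next
  case (sc_alpha m P n)
  show ?case
  proof (cases "prefix_view P")
    case (Some x)
    obtain M B where x: "x = (M, B)" by force
    have fP: "fn P = fn_cap M \<union> fn B"
      using prefix_view_fn Some x by auto
    show ?thesis
    proof (cases "n \<in> fn_cap M")
      case True
      then have "m \<in> fn_cap (swap_cap n m M)"
        by (metis fn_cap_swap image_eqI swp_simps(1))
      then show ?thesis using Some x True by (simp add: prefix_view_swap same_prefix_def)
    next
      case False
      have "m \<notin> fn_cap M" "m \<notin> fn B" using sc_alpha fP by auto
      then show ?thesis using Some x False scong.sc_alpha[of m B n]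
        by (simp add: prefix_view_swap swap_cap_fresh same_prefix_def)
    qed
  qed (simp add: prefix_view_swap same_prefix_def)
qed (simp_all add: same_prefix_def scong.sc_refl)

lemma Pre_scong_Pre: "scong (Pre M B) (Pre M' B') \<Longrightarrow> M = M' \<and> scong B B'"
  using scong_prefix_view[of "Pre M B" "Pre M' B'"] by (simp add: same_prefix_def)


section \<open>Thread splits\<close>

text \<open>\<open>thread_split P X C\<close>: the thread \<open>C\<close> of \<open>P\<close>, together with the restrictions
  it pulls along, is cut out of \<open>P\<close>, leaving \<open>X\<close>.\<close>

inductive thread_split :: "proc \<Rightarrow> proc \<Rightarrow> proc \<Rightarrow> bool" where
  ts_base: "threads P = 1 \<Longrightarrow> \<forall>a b. P \<noteq> Par a b \<Longrightarrow> thread_split P Nil P"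
| ts_parL: "thread_split P X C \<Longrightarrow> thread_split (Par P Q) (Par X Q) C"
| ts_parR: "thread_split Q X C \<Longrightarrow> thread_split (Par P Q) (Par P X) C"
| ts_resX: "thread_split P X C \<Longrightarrow> j \<notin> fn C \<Longrightarrow> thread_split (Res j P) (Res j X) C"
| ts_resC: "thread_split P X C \<Longrightarrow> j \<notin> fn X \<Longrightarrow> thread_split (Res j P) X (Res j C)"

inductive_cases thread_split_ParE: "thread_split (Par P Q) X C"
inductive_cases thread_split_ResE: "thread_split (Res j P) X C"
inductive_cases thread_split_AmbE: "thread_split (Amb k P) X C"
inductive_cases thread_split_PreE: "thread_split (Pre M P) X C"

lemma thread_split_sound:
  "thread_split P X C \<Longrightarrow>
     scong P (Par X C) \<and> threads C = 1 \<and> fn P = fn X \<union> fn C \<and> threads P = threads X + threads C"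
proof (induction rule: thread_split.induct)
  case (ts_base P)
  then show ?case by (auto simp: sc_nil_par sc_sym)
next
  case (ts_parL P X C Q)
  then show ?case by (auto intro: sc_trans[OF sc_parL sc_par_right_commute])
next
  case (ts_parR Q X C P)
  then show ?case by (auto intro: sc_trans[OF sc_parR sc_par_assoc'])
next
  case (ts_resX P X C j)
  then show ?case by (auto intro: sc_trans[OF sc_res sc_res_par'])
next
  case (ts_resC P X C j)
  then show ?case by (auto intro: sc_trans[OF sc_res sc_res_par])
qed

lemma thread_split_garbage: "thread_split P X C \<Longrightarrow> garbage P = garbage X + garbage C"
  using thread_split_sound scong_counts by fastforce

lemma thread_split_Amb: "thread_split (Amb k P) X C \<Longrightarrow> X = Nil \<and> C = Amb k P"
  by (erule thread_split_AmbE) auto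

lemma thread_split_Pre: "thread_split (Pre M P) X C \<Longrightarrow> X = Nil \<and> C = Pre M P"
  by (erule thread_split_PreE) auto

lemma thread_split_Par_cases:
  assumes "thread_split (Par P Q) X C"
  obtains (left) X1 where "X = Par X1 Q" "thread_split P X1 C"
    | (right) X1 where "X = Par P X1" "thread_split Q X1 C"
  using assms by (rule thread_split_ParE) auto

lemma thread_split_Res_cases:
  assumes "thread_split (Res j P) X C"
  obtains (base) "X = Nil" "C = Res j P" "threads P = 1"
    | (rest) X1 where "X = Res j X1" "thread_split P X1 C" "j \<notin> fn C"
    | (thread) C1 where "C = Res j C1" "thread_split P X C1" "j \<notin> fn X"
  using assms by (rule thread_split_ResE) auto

lemma thread_split_swap:
  "thread_split P X C \<Longrightarrow> thread_split (swap a b P) (swap a b X) (swap a b C)"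
proof (induction rule: thread_split.induct)
  case (ts_base P)
  then have "\<forall>x y. swap a b P \<noteq> Par x y" by (cases P) auto
  then show ?case using ts_base by (simp add: thread_split.ts_base)
qed (auto intro: thread_split.intros)

lemma thread_split_exists: "threads Q = 1 \<Longrightarrow> \<exists>X C. thread_split Q X C \<and> threads X = 0"
proof (induction Q)
  case (Par P Q)
  then consider "threads P = 1" "threads Q = 0" | "threads P = 0" "threads Q = 1"
    by (force simp: add_is_1)
  then show ?case
    using Par by cases (force intro: ts_parL ts_parR)+
qed (fastforce intro: ts_base)+

definition splits_transfer :: "proc \<Rightarrow> proc \<Rightarrow> bool" where
  "splits_transfer P Q \<longleftrightarrow>
     (\<forall>X C. thread_split P X C \<longrightarrow> (\<exists>X' C'. thread_split Q X' C' \<and> pcong X X' \<and> pcong C C'))"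

lemma splits_transfer_refl: "splits_transfer P P"
  unfolding splits_transfer_def using pcong_refl by blast

lemma splits_transfer_trans: "splits_transfer P Q \<Longrightarrow> splits_transfer Q R \<Longrightarrow> splits_transfer P R"
  unfolding splits_transfer_def by (meson pcong_trans)

lemma splits_transfer_single_thread:
  assumes "scong P Q" "threads Q = 1"
  shows "splits_transfer P Q"
  unfolding splits_transfer_def
proof (intro allI impI)
  fix X C assume split: "thread_split P X C"
  have P: "scong P (Par X C)" "threads P = threads X + threads C" "threads C = 1"
    using thread_split_sound[OF split] by auto
  then have X: "threads X = 0"
    using assms scong_counts[OF assms(1)] by auto
  obtain X' C' where split': "thread_split Q X' C'" "threads X' = 0"
    using thread_split_exists assms(2) by blast
  have "pcong X X'"
    using X split'(2) unfolding pcong_def by (meson prune_weight_0 threads_0_weight sc_sym sc_trans)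
  moreover have "pcong C C'"
  proof -
    have "pcong C (Par X C)"
      using X by (simp add: pcong_par_weightless' pcong_sym threads_0_weight)
    also have "scong \<dots> Q"
      using P(1) assms(1) by (meson sc_sym sc_trans)
    also have "scong \<dots> (Par X' C')"
      using thread_split_sound[OF split'(1)] by blast
    also have "pcong \<dots> C'"
      using split'(2) by (simp add: pcong_par_weightless' threads_0_weight)
    finally show ?thesis .
  qed
  ultimately show "\<exists>X' C'. thread_split Q X' C' \<and> pcong X X' \<and> pcong C C'"
    using split' by blast
qed

lemma splits_transfer_single_thread_sym:
  "scong P Q \<Longrightarrow> threads P = 1 \<Longrightarrow> splits_transfer P Q \<and> splits_transfer Q P"
  using splits_transfer_single_thread[of P Q] splits_transfer_single_thread[of Q P]
    scong_counts[of P Q] sc_sym[of P Q] by auto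

lemma splits_transfer_Res:
  assumes "splits_transfer P Q" and "threads P \<noteq> 1"
  shows "splits_transfer (Res n P) (Res n Q)"
  unfolding splits_transfer_def
proof (intro allI impI)
  fix X C assume "thread_split (Res n P) X C"
  then show "\<exists>X' C'. thread_split (Res n Q) X' C' \<and> pcong X X' \<and> pcong C C'"
  proof (cases rule: thread_split_Res_cases)
    case (rest X1)
    then obtain X1' C' where "thread_split Q X1' C'" "pcong X1 X1'" "pcong C C'"
      using assms unfolding splits_transfer_def by blast
    with rest show ?thesis
      by (metis pcong_Res pcong_fn ts_resX)
  next
    case (thread C1)
    then obtain X' C1' where "thread_split Q X' C1'" "pcong X X'" "pcong C1 C1'"
      using assms unfolding splits_transfer_def by blast
    with thread show ?thesis
      by (metis pcong_Res pcong_fn ts_resC)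
  qed (use assms in simp)
qed

lemma splits_transfer_Par:
  assumes "splits_transfer P P'" "splits_transfer Q Q'" "scong P P'" "scong Q Q'"
  shows "splits_transfer (Par P Q) (Par P' Q')"
  unfolding splits_transfer_def
proof (intro allI impI)
  fix X C assume "thread_split (Par P Q) X C"
  then show "\<exists>X' C'. thread_split (Par P' Q') X' C' \<and> pcong X X' \<and> pcong C C'"
  proof (cases rule: thread_split_Par_cases)
    case (left X1)
    then obtain X1' C' where "thread_split P' X1' C'" "pcong X1 X1'" "pcong C C'"
      using assms(1) unfolding splits_transfer_def by blast
    with left assms(4) show ?thesis
      by (meson pcong_Par scong_pcong ts_parL)
  next
    case (right X1)
    then obtain X1' C' where "thread_split Q' X1' C'" "pcong X1 X1'" "pcong C C'"
      using assms(2) unfolding splits_transfer_def by blast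
    with right assms(3) show ?thesis
      by (meson pcong_Par scong_pcong ts_parR)
  qed
qed

lemma splits_transfer_par_comm: "splits_transfer (Par P Q) (Par Q P)"
  unfolding splits_transfer_def
proof (intro allI impI)
  fix X C assume "thread_split (Par P Q) X C"
  then show "\<exists>X' C'. thread_split (Par Q P) X' C' \<and> pcong X X' \<and> pcong C C'"
    by (cases rule: thread_split_Par_cases) (meson pcong_refl sc_par_comm scong_pcong ts_parL ts_parR)+
qed

lemma splits_transfer_par_assoc: "splits_transfer (Par (Par P Q) R) (Par P (Par Q R))"
  unfolding splits_transfer_def
proof (intro allI impI)
  fix X C assume "thread_split (Par (Par P Q) R) X C"
  then show "\<exists>X' C'. thread_split (Par P (Par Q R)) X' C' \<and> pcong X X' \<and> pcong C C'"
  proof (cases rule: thread_split_Par_cases)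
    case outer: (left X1)
    from outer(2) show ?thesis
    proof (cases rule: thread_split_Par_cases)
      case (left X2)
      then show ?thesis using outer
        by (intro exI[of _ "Par X2 (Par Q R)"] exI[of _ C])
          (simp add: ts_parL scong_pcong sc_par_assoc)
    next
      case (right X2)
      then show ?thesis using outer
        by (intro exI[of _ "Par P (Par X2 R)"] exI[of _ C])
          (simp add: ts_parL ts_parR scong_pcong sc_par_assoc)
    qed
  next
    case (right X1)
    then show ?thesis
      by (intro exI[of _ "Par P (Par Q X1)"] exI[of _ C])
        (simp add: ts_parR scong_pcong sc_par_assoc)
  qed
qed

lemma splits_transfer_par_assoc': "splits_transfer (Par P (Par Q R)) (Par (Par P Q) R)"
  unfolding splits_transfer_def
proof (intro allI impI)
  fix X C assume "thread_split (Par P (Par Q R)) X C"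
  then show "\<exists>X' C'. thread_split (Par (Par P Q) R) X' C' \<and> pcong X X' \<and> pcong C C'"
  proof (cases rule: thread_split_Par_cases)
    case (left X1)
    then show ?thesis
      by (intro exI[of _ "Par (Par X1 Q) R"] exI[of _ C])
        (simp add: ts_parL scong_pcong sc_par_assoc')
  next
    case outer: (right X1)
    from outer(2) show ?thesis
    proof (cases rule: thread_split_Par_cases)
      case (left X2)
      then show ?thesis using outer
        by (intro exI[of _ "Par (Par P X2) R"] exI[of _ C])
          (simp add: ts_parL ts_parR scong_pcong sc_par_assoc')
    next
      case (right X2)
      then show ?thesis using outer
        by (intro exI[of _ "Par (Par P Q) X2"] exI[of _ C])
          (simp add: ts_parR scong_pcong sc_par_assoc')
    qed
  qed
qed

lemma splits_transfer_par_nil: "splits_transfer (Par P Nil) P"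
  unfolding splits_transfer_def
proof (intro allI impI)
  fix X C assume "thread_split (Par P Nil) X C"
  then show "\<exists>X' C'. thread_split P X' C' \<and> pcong X X' \<and> pcong C C'"
  proof (cases rule: thread_split_Par_cases)
    case (left X1)
    then show ?thesis by (meson pcong_refl sc_par_nil scong_pcong)
  next
    case (right X1)
    then show ?thesis using thread_split_sound by fastforce
  qed
qed

lemma splits_transfer_par_nil': "splits_transfer P (Par P Nil)"
  unfolding splits_transfer_def
proof (intro allI impI)
  fix X C assume "thread_split P X C"
  then have "thread_split (Par P Nil) (Par X Nil) C" by (rule ts_parL)
  then show "\<exists>X' C'. thread_split (Par P Nil) X' C' \<and> pcong X X' \<and> pcong C C'"
    by (meson pcong_refl sc_par_nil' scong_pcong)
qed

lemma splits_transfer_res_res: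
  assumes "threads P \<noteq> 1"
  shows "splits_transfer (Res n (Res m P)) (Res m (Res n P))"
  unfolding splits_transfer_def
proof (intro allI impI)
  fix X C assume split: "thread_split (Res n (Res m P)) X C"
  have swap_res: "pcong (Res n (Res m D)) (Res m (Res n D))" for D
    by (rule scong_pcong, rule sc_res_res)
  show "\<exists>X' C'. thread_split (Res m (Res n P)) X' C' \<and> pcong X X' \<and> pcong C C'"
  proof (cases "n = m")
    case False
    from split show ?thesis
    proof (cases rule: thread_split_Res_cases)
      case outer: (rest X1)
      from outer(2) show ?thesis
      proof (cases rule: thread_split_Res_cases)
        case (rest X2)
        then show ?thesis using outer swap_res
          by (intro exI[of _ "Res m (Res n X2)"] exI[of _ C]) (auto intro!: ts_resX)
      next
        case (thread C1)
        then show ?thesis using outer False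
          by (intro exI[of _ "Res n X1"] exI[of _ C]) (auto intro!: ts_resX ts_resC)
      qed (use assms in simp)
    next
      case outer: (thread C1)
      from outer(2) show ?thesis
      proof (cases rule: thread_split_Res_cases)
        case (rest X1)
        then show ?thesis using outer False
          by (intro exI[of _ X] exI[of _ "Res n C1"]) (auto intro!: ts_resX ts_resC)
      next
        case (thread C2)
        then show ?thesis using outer swap_res
          by (intro exI[of _ X] exI[of _ "Res m (Res n C2)"]) (auto intro!: ts_resC)
      qed (use assms in simp)
    qed (use assms in simp)
  qed (use split pcong_refl in blast)
qed

lemma splits_transfer_res_par:
  assumes "n \<notin> fn P" and "threads (Par P Q) \<noteq> 1"
  shows "splits_transfer (Res n (Par P Q)) (Par P (Res n Q))"
  unfolding splits_transfer_def
proof (intro allI impI)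
  fix X C assume "thread_split (Res n (Par P Q)) X C"
  then show "\<exists>X' C'. thread_split (Par P (Res n Q)) X' C' \<and> pcong X X' \<and> pcong C C'"
  proof (cases rule: thread_split_Res_cases)
    case (rest X1)
    from rest(2) show ?thesis
    proof (cases rule: thread_split_Par_cases)
      case (left X2)
      then have "n \<notin> fn X2" using thread_split_sound[OF left(2)] assms(1) by auto
      then show ?thesis using rest left
        by (intro exI[of _ "Par X2 (Res n Q)"] exI[of _ C])
          (simp add: ts_parL scong_pcong sc_res_par)
    next
      case (right X2)
      then show ?thesis using rest assms(1)
        by (intro exI[of _ "Par P (Res n X2)"] exI[of _ C])
          (simp add: ts_parR ts_resX scong_pcong sc_res_par)
    qed
  next
    case (thread C1)
    from thread(2) show ?thesis
    proof (cases rule: thread_split_Par_cases)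
      case (left X2)
      then have "n \<notin> fn C1" "n \<notin> fn Q"
        using thread thread_split_sound[OF left(2)] assms(1) by auto
      then show ?thesis using thread left
        by (intro exI[of _ "Par X2 (Res n Q)"] exI[of _ C1])
          (simp add: ts_parL pcong_def sc_refl)
    next
      case (right X2)
      then show ?thesis using thread
        by (intro exI[of _ X] exI[of _ C]) (simp add: ts_parR ts_resC)
    qed
  qed (use assms in simp)
qed

lemma splits_transfer_par_res:
  assumes "n \<notin> fn P"
  shows "splits_transfer (Par P (Res n Q)) (Res n (Par P Q))"
  unfolding splits_transfer_def
proof (intro allI impI)
  fix X C assume "thread_split (Par P (Res n Q)) X C"
  then show "\<exists>X' C'. thread_split (Res n (Par P Q)) X' C' \<and> pcong X X' \<and> pcong C C'"
  proof (cases rule: thread_split_Par_cases)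
    case (left X1)
    then have "n \<notin> fn C" "n \<notin> fn X1"
      using thread_split_sound[OF left(2)] assms by auto
    then show ?thesis using left
      by (intro exI[of _ "Res n (Par X1 Q)"] exI[of _ C])
        (simp add: ts_parL ts_resX scong_pcong sc_sym[OF sc_res_par])
  next
    case (right X1)
    from right(2) show ?thesis
    proof (cases rule: thread_split_Res_cases)
      case base
      obtain X3 C3 where split3: "thread_split Q X3 C3" "threads X3 = 0"
        using thread_split_exists base by blast
      then have "fn X3 = {}" using threads_0_weight weight_0_fn by blast
      then have "thread_split (Res n (Par P Q)) (Par P X3) (Res n C3)"
        using split3 assms by (simp add: ts_parR ts_resC)
      moreover have "pcong X (Par P X3)"
        using right base split3(2)
        by (simp add: pcong_Par pcong_sym pcong_weight_0 threads_0_weight)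
      moreover have "pcong C (Res n C3)"
      proof -
        have "pcong Q (Par X3 C3)" using thread_split_sound[OF split3(1)] scong_pcong by blast
        also have "pcong \<dots> C3" using split3(2) threads_0_weight pcong_par_weightless' by blast
        finally show ?thesis using base by (simp add: pcong_Res)
      qed
      ultimately show ?thesis by blast
    next
      case (rest X2)
      then show ?thesis using right assms
        by (intro exI[of _ "Res n (Par P X2)"] exI[of _ C])
          (simp add: ts_parR ts_resX scong_pcong sc_sym[OF sc_res_par])
    next
      case (thread C1)
      then show ?thesis using right assms
        by (intro exI[of _ X] exI[of _ C]) (simp add: ts_parR ts_resC)
    qed
  qed
qed

lemma splits_transfer_alpha:
  assumes "m \<notin> fn P" and "threads P \<noteq> 1"
  shows "splits_transfer (Res n P) (Res m (swap n m P))"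
  unfolding splits_transfer_def
proof (intro allI impI)
  fix X C assume "thread_split (Res n P) X C"
  then show "\<exists>X' C'. thread_split (Res m (swap n m P)) X' C' \<and> pcong X X' \<and> pcong C C'"
  proof (cases rule: thread_split_Res_cases)
    case (rest X1)
    have fn_P: "fn P = fn X1 \<union> fn C" using thread_split_sound[OF rest(2)] by auto
    have "thread_split (Res m (swap n m P)) (Res m (swap n m X1)) (swap n m C)"
      using rest by (auto intro!: ts_resX thread_split_swap simp: swp_def split: if_splits)
    moreover have "pcong X (Res m (swap n m X1))"
      using rest fn_P assms(1) by (simp add: scong_pcong sc_alpha)
    moreover have "pcong C (swap n m C)"
      using rest fn_P assms(1) by (simp add: scong_pcong sc_sym swap_fresh_scong)
    ultimately show ?thesis by blast
  next
    case (thread C1)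
    have fn_P: "fn P = fn X \<union> fn C1" using thread_split_sound[OF thread(2)] by auto
    have "thread_split (Res m (swap n m P)) (swap n m X) (Res m (swap n m C1))"
      using thread by (auto intro!: ts_resC thread_split_swap simp: swp_def split: if_splits)
    moreover have "pcong C (Res m (swap n m C1))"
      using thread fn_P assms(1) by (simp add: scong_pcong sc_alpha)
    moreover have "pcong X (swap n m X)"
      using thread fn_P assms(1) by (simp add: scong_pcong sc_sym swap_fresh_scong)
    ultimately show ?thesis by blast
  qed (use assms in simp)
qed

lemma scong_splits_transfer: "scong P Q \<Longrightarrow> splits_transfer P Q \<and> splits_transfer Q P"
proof (induction rule: scong.induct)
  case (sc_trans P Q R)
  then show ?case using splits_transfer_trans by blast
next
  case (sc_par P P' Q Q')
  then show ?case using splits_transfer_Par scong.sc_sym by blast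
next
  case (sc_res P Q n)
  show ?case
  proof (cases "threads P = 1")
    case True
    then show ?thesis using scong.sc_res[OF sc_res(1)] by (simp add: splits_transfer_single_thread_sym)
  next
    case False
    then show ?thesis using sc_res.IH scong_counts[OF sc_res(1)] splits_transfer_Res by auto
  qed
next
  case (sc_res_res n m P)
  show ?case
  proof (cases "threads P = 1")
    case True
    then show ?thesis using scong.sc_res_res by (simp add: splits_transfer_single_thread_sym)
  qed (simp add: splits_transfer_res_res)
next
  case (sc_res_par n P Q)
  show ?case
  proof (cases "threads (Par P Q) = 1")
    case True
    then show ?thesis using scong.sc_res_par[OF sc_res_par]
      by (simp add: splits_transfer_single_thread_sym)
  qed (use sc_res_par splits_transfer_res_par splits_transfer_par_res in blast)
next
  case (sc_alpha m P n)
  show ?case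
  proof (cases "threads P = 1 \<or> n = m")
    case True
    then show ?thesis using scong.sc_alpha[OF sc_alpha]
      by (auto simp: splits_transfer_single_thread_sym splits_transfer_refl)
  next
    case False
    then have "splits_transfer (Res m (swap n m P)) (Res n (swap m n (swap n m P)))"
      using sc_alpha by (intro splits_transfer_alpha) (auto simp: swp_def split: if_splits)
    then show ?thesis using splits_transfer_alpha[OF sc_alpha] False
      by (simp add: swap_commute[of m n])
  qed
next
  case (sc_sym P Q)
  then show ?case by blast
next
  case (sc_amb P Q n)
  then show ?case using scong.sc_amb by (simp add: splits_transfer_single_thread_sym)
next
  case (sc_pre P Q M)
  then show ?case using scong.sc_pre by (simp add: splits_transfer_single_thread_sym)
next
  case (sc_res_amb n m P)
  then show ?case using scong.sc_res_amb by (simp add: splits_transfer_single_thread_sym)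
next
  case (sc_res_pre n M P)
  then show ?case using scong.sc_res_pre by (simp add: splits_transfer_single_thread_sym)
qed (simp_all add: splits_transfer_refl splits_transfer_par_comm splits_transfer_par_assoc
    splits_transfer_par_assoc' splits_transfer_par_nil splits_transfer_par_nil')

lemma thread_split_scong:
  "scong P Q \<Longrightarrow> thread_split P X C \<Longrightarrow> \<exists>X' C'. thread_split Q X' C' \<and> pcong X X' \<and> pcong C C'"
  using scong_splits_transfer unfolding splits_transfer_def by blast

lemma pcong_thread_split:
  assumes "pcong X (Par K W)" and "threads K = 1"
  obtains X' C' where "thread_split X X' C'" "pcong X' W" "pcong C' K"
proof -
  obtain XK CK where K: "thread_split (prune K) XK CK" "threads XK = 0"
    using thread_split_exists assms(2) by (metis counts_prune(1))
  define W' where "W' = Par (prune W) (vacuous (garbage X))"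
  have "scong X (Par (prune X) (vacuous (garbage X)))" by (rule scong_prune_vacuous)
  also have "scong \<dots> (Par (Par (prune K) (prune W)) (vacuous (garbage X)))"
    using assms(1) by (simp add: pcong_def sc_parL)
  also have "scong \<dots> (Par (prune K) W')" unfolding W'_def by (rule sc_par_assoc)
  finally have "scong (Par (prune K) W') X" by (rule sc_sym)
  moreover have "thread_split (Par (prune K) W') (Par XK W') CK" using K(1) by (rule ts_parL)
  ultimately obtain X' C' where split: "thread_split X X' C'" "pcong (Par XK W') X'" "pcong CK C'"
    using thread_split_scong by blast
  have "pcong (Par XK W') W"
  proof -
    have "pcong (Par XK W') W'" using K(2) by (simp add: pcong_par_weightless' threads_0_weight)
    also have "pcong \<dots> (prune W)" by (simp add: W'_def pcong_par_weightless)
    also have "pcong \<dots> W" by (rule pcong_prune)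
    finally show ?thesis .
  qed
  moreover have "pcong CK K"
  proof -
    have "pcong CK (Par XK CK)" using K(2) by (simp add: pcong_sym pcong_par_weightless' threads_0_weight)
    also have "scong \<dots> (prune K)" using thread_split_sound[OF K(1)] by (blast intro: sc_sym)
    also have "pcong \<dots> K" by (rule pcong_prune)
    finally show ?thesis .
  qed
  ultimately show thesis using that split by (meson pcong_sym pcong_trans)
qed


section \<open>Renaming restricted names apart\<close>

definition perm :: "(name \<times> name) list \<Rightarrow> proc \<Rightarrow> proc" where
  "perm ps P = foldl (\<lambda>P (a, b). swap a b P) P ps"

definition perm_fixes :: "(name \<times> name) list \<Rightarrow> name \<Rightarrow> bool" where
  "perm_fixes ps k \<longleftrightarrow> (\<forall>(a, b)\<in>set ps. k \<noteq> a \<and> k \<noteq> b)"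

lemma perm_Nil [simp]: "perm [] P = P"
  by (simp add: perm_def)

lemma perm_Cons: "perm ((a, b) # ps) P = perm ps (swap a b P)"
  by (simp add: perm_def)

lemma perm_snoc [simp]: "perm (ps @ [(a, b)]) P = swap a b (perm ps P)"
  by (simp add: perm_def)

lemma perm_Par [simp]: "perm ps (Par P Q) = Par (perm ps P) (perm ps Q)"
  by (induction ps arbitrary: P Q) (auto simp: perm_def)

lemma perm_Amb: "perm_fixes ps k \<Longrightarrow> perm ps (Amb k P) = Amb k (perm ps P)"
  by (induction ps arbitrary: P) (auto simp: perm_Cons perm_fixes_def)

lemma perm_Open: "perm_fixes ps k \<Longrightarrow> perm ps (Pre (Open k) P) = Pre (Open k) (perm ps P)"
  by (induction ps arbitrary: P) (auto simp: perm_Cons perm_fixes_def)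

lemma perm_fixed_scong: "\<forall>k\<in>fn T. perm_fixes ps k \<Longrightarrow> scong (perm ps T) T"
proof (induction ps arbitrary: T)
  case (Cons p ps)
  obtain a b where p: "p = (a, b)" by force
  have swap_T: "scong (swap a b T) T"
    using Cons.prems p by (intro swap_fresh_scong) (auto simp: perm_fixes_def)
  then have "scong (perm ps (swap a b T)) (swap a b T)"
    using Cons scong_fn[OF swap_T] by (auto simp: perm_fixes_def)
  then show ?case using swap_T p by (simp add: perm_Cons sc_trans)
qed (simp add: perm_def sc_refl)

lemma resl_rename_away:
  assumes "finite F"
  shows "\<exists>A' ps. set A' \<inter> F = {} \<and> (\<forall>D. fn D \<subseteq> F \<longrightarrow> scong (resl A D) (resl A' (perm ps D))) \<and>
           (\<forall>k\<in>F - set A. perm_fixes ps k)"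
  using assms
proof (induction A arbitrary: F)
  case Nil
  show ?case by (intro exI[of _ "[]"]) (simp add: perm_def perm_fixes_def sc_refl)
next
  case (Cons a A)
  obtain b where b: "b \<notin> insert a F"
    using fresh_name Cons.prems by (meson finite_insert)
  define F' where "F' = insert a (insert b F)"
  obtain A' ps where IH: "set A' \<inter> F' = {}"
      "\<forall>D. fn D \<subseteq> F' \<longrightarrow> scong (resl A D) (resl A' (perm ps D))" "\<forall>k\<in>F' - set A. perm_fixes ps k"
    using Cons.IH[of F'] Cons.prems by (auto simp: F'_def)
  have ab: "a \<notin> set A'" "b \<notin> set A'" using IH(1) by (auto simp: F'_def)
  have "scong (resl (a # A) D) (resl (b # A') (perm (ps @ [(a, b)]) D))" if "fn D \<subseteq> F" for D
  proof -
    have A_D: "scong (resl A D) (resl A' (perm ps D))" using IH(2) that by (auto simp: F'_def)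
    then have "b \<notin> fn (resl A' (perm ps D))" using scong_fn[OF A_D] that b by auto
    then have "scong (Res a (resl A' (perm ps D))) (Res b (swap a b (resl A' (perm ps D))))"
      by (rule sc_alpha)
    moreover have "map (swp a b) A' = A'"
      using ab by (induction A') auto
    ultimately show ?thesis using A_D
      by (simp add: swap_resl sc_trans[OF sc_res])
  qed
  moreover have "perm_fixes (ps @ [(a, b)]) k" if "k \<in> F - set (a # A)" for k
    using IH(3) that b by (auto simp: perm_fixes_def F'_def)
  ultimately show ?case using IH(1) b
    by (intro exI[of _ "b # A'"] exI[of _ "ps @ [(a, b)]"]) (auto simp: F'_def)
qed


lemma barb_fresh:
  assumes "barb P m" and "finite F"
  shows "\<exists>A Q R. scong P (resl A (Par (Amb m Q) R)) \<and> m \<notin> set A \<and> set A \<inter> F = {}"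
proof -
  obtain A Q R where P: "scong P (resl A (Par (Amb m Q) R))" "m \<notin> set A"
    using assms(1) by (auto simp: barb_def)
  define F' where "F' = F \<union> fn (Par (Amb m Q) R)"
  obtain A' ps where ren: "set A' \<inter> F' = {}"
      "\<forall>D. fn D \<subseteq> F' \<longrightarrow> scong (resl A D) (resl A' (perm ps D))" "\<forall>k\<in>F' - set A. perm_fixes ps k"
    using resl_rename_away[of F' A] assms(2) by (auto simp: F'_def)
  then have "scong (resl A (Par (Amb m Q) R)) (resl A' (perm ps (Par (Amb m Q) R)))"
    "perm_fixes ps m"
    using ren(2)[rule_format, of "Par (Amb m Q) R"] ren(3) P(2) by (auto simp: F'_def)
  then have "scong P (resl A' (Par (Amb m (perm ps Q)) (perm ps R)))"
    using P(1) by (metis perm_Amb perm_Par sc_trans)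
  moreover have "m \<notin> set A'" "set A' \<inter> F = {}" using ren(1) by (auto simp: F'_def)
  ultimately show ?thesis by blast
qed

lemma barb_top_ambs: "barb P m \<longleftrightarrow> m \<in> top_ambs P"
proof
  assume "barb P m"
  then obtain A Q R where "scong P (resl A (Par (Amb m Q) R))" "m \<notin> set A"
    by (auto simp: barb_def)
  then show "m \<in> top_ambs P" using scong_top_ambs top_ambs_resl by fastforce
next
  assume "m \<in> top_ambs P"
  then show "barb P m"
  proof (induction P)
    case (Amb k P)
    then have "scong (Amb k P) (resl [] (Par (Amb m P) Nil))" by (simp add: sc_par_nil')
    then show ?case unfolding barb_def by (metis empty_iff empty_set)
  next
    case (Res j P)
    then obtain A Q R where "scong P (resl A (Par (Amb m Q) R))" "m \<notin> set A" "j \<noteq> m"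
      by (auto simp: barb_def)
    then show ?case unfolding barb_def by (metis resl.simps(2) sc_res set_ConsD)
  next
    case (Par P1 P2)
    have par_barb: "barb (Par P Q) m" if bP: "barb P m" for P Q
    proof -
      obtain A P' R where "scong P (resl A (Par (Amb m P') R))" "m \<notin> set A" "set A \<inter> fn Q = {}"
        using barb_fresh[OF bP, of "fn Q"] by auto
      then have "scong (Par P Q) (resl A (Par (Amb m P') (Par R Q)))"
        by (meson resl_cong resl_par_extrude sc_parL sc_par_assoc sc_trans)
      then show ?thesis using \<open>m \<notin> set A\<close> unfolding barb_def by blast
    qed
    from Par show ?case
      by (metis Un_iff par_barb sc_par_comm barb_def sc_trans top_ambs.simps(5))
  qed auto
qed


section \<open>Reduction steps without structural congruence\<close>

inductive rstep :: "proc \<Rightarrow> proc \<Rightarrow> bool" where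
  rstep_in: "rstep (Par (Amb n (Par (Pre (In m) P) Q)) (Amb m R)) (Amb m (Par (Amb n (Par P Q)) R))"
| rstep_out: "rstep (Amb m (Par (Amb n (Par (Pre (Out m) P) Q)) R)) (Par (Amb n (Par P Q)) (Amb m R))"
| rstep_open: "rstep (Par (Pre (Open n) P) (Amb n Q)) (Par P Q)"
| rstep_res: "rstep P Q \<Longrightarrow> rstep (Res n P) (Res n Q)"
| rstep_amb: "rstep P Q \<Longrightarrow> rstep (Amb n P) (Amb n Q)"
| rstep_par: "rstep P Q \<Longrightarrow> rstep (Par P R) (Par Q R)"

lemma red_rstep: "red P Q \<Longrightarrow> \<exists>P0 Q0. scong P P0 \<and> rstep P0 Q0 \<and> scong Q0 Q"
  by (induction rule: red.induct)
    (blast intro: rstep.intros sc_refl sc_res sc_amb sc_parL sc_trans)+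

lemma rstep_fn: "rstep P Q \<Longrightarrow> fn Q \<subseteq> fn P"
  by (induction rule: rstep.induct) auto

lemma rstep_amb_threads: "rstep P Q \<Longrightarrow> amb_threads P \<ge> 1"
  by (induction rule: rstep.induct) auto

lemma rstep_weight: "rstep P Q \<Longrightarrow> weight P \<ge> 2"
  by (induction rule: rstep.induct) auto

lemma red_thread_split:
  assumes "red P Q" "thread_split P X C"
  obtains P0 Q0 X0 C0 where "scong P P0" "rstep P0 Q0" "scong Q0 Q"
    "thread_split P0 X0 C0" "pcong X X0" "pcong C C0"
  by (metis assms red_rstep thread_split_scong)


section \<open>Inversion of reduction steps\<close>

definition opens_amb :: "proc \<Rightarrow> proc \<Rightarrow> proc \<Rightarrow> bool" where
  "opens_amb X C Q \<longleftrightarrow>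
     (\<exists>k A P1 P2 B. scong X (resl A (Par (Amb k P1) P2)) \<and> scong C (Pre (Open k) B) \<and>
        scong Q (resl A (Par (Par P1 B) P2)) \<and> k \<notin> set A \<and> set A \<inter> fn B = {})"

lemma opens_amb_redex: "opens_amb (Par Nil (Amb k Q)) (Pre (Open k) P) (Par P Q)"
proof -
  have "scong (Par Nil (Amb k Q)) (resl [] (Par (Amb k Q) Nil))"
    by (simp add: sc_par_comm)
  moreover have "scong (Par P Q) (resl [] (Par (Par Q P) Nil))"
    by (simp add: sc_trans[OF sc_par_comm sc_par_nil'])
  ultimately show ?thesis unfolding opens_amb_def using sc_refl by fastforce
qed

lemma opens_amb_fresh:
  assumes "opens_amb X C Q" and "finite F"
  shows "\<exists>k A P1 P2 B. scong X (resl A (Par (Amb k P1) P2)) \<and> scong C (Pre (Open k) B) \<and>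
           scong Q (resl A (Par (Par P1 B) P2)) \<and> k \<notin> set A \<and> set A \<inter> fn B = {} \<and>
           set A \<inter> F = {}"
proof -
  obtain k A P1 P2 B where op: "scong X (resl A (Par (Amb k P1) P2))" "scong C (Pre (Open k) B)"
      "scong Q (resl A (Par (Par P1 B) P2))" "k \<notin> set A" "set A \<inter> fn B = {}"
    using assms(1) unfolding opens_amb_def by blast
  define F' where "F' = F \<union> fn (Par (Amb k P1) P2) \<union> fn B"
  obtain A' ps where ren: "set A' \<inter> F' = {}"
      "\<forall>D. fn D \<subseteq> F' \<longrightarrow> scong (resl A D) (resl A' (perm ps D))" "\<forall>k\<in>F' - set A. perm_fixes ps k"
    using resl_rename_away[of F' A] assms(2) by (auto simp: F'_def)
  have "scong (resl A (Par (Amb k P1) P2)) (resl A' (perm ps (Par (Amb k P1) P2)))"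
    "perm_fixes ps k"
    using ren(2)[rule_format, of "Par (Amb k P1) P2"] ren(3) op(4) by (auto simp: F'_def)
  then have "scong X (resl A' (Par (Amb k (perm ps P1)) (perm ps P2)))"
    using op(1) by (metis perm_Amb perm_Par sc_trans)
  moreover have "scong Q (resl A' (Par (Par (perm ps P1) B) (perm ps P2)))"
  proof -
    have "fn (Par (Par P1 B) P2) \<subseteq> F'" by (auto simp: F'_def)
    then have "scong Q (resl A' (perm ps (Par (Par P1 B) P2)))"
      using sc_trans[OF op(3) ren(2)[rule_format]] by blast
    moreover have "scong (perm ps B) B"
      using ren(3) op(5) by (intro perm_fixed_scong) (auto simp: F'_def)
    ultimately show ?thesis
      by (simp add: sc_trans[OF _ resl_cong] sc_parL sc_parR)
  qed
  moreover have "k \<notin> set A'" "set A' \<inter> fn B = {}" "set A' \<inter> F = {}"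
    using ren(1) by (auto simp: F'_def)
  ultimately show ?thesis using op(2) by blast
qed

lemma opens_amb_Res_rest:
  assumes "opens_amb X C Q" and "j \<notin> fn C"
  shows "opens_amb (Res j X) C (Res j Q)"
proof -
  obtain k A P1 P2 B where op: "scong X (resl A (Par (Amb k P1) P2))" "scong C (Pre (Open k) B)"
      "scong Q (resl A (Par (Par P1 B) P2))" "k \<notin> set A" "set A \<inter> fn B = {}"
    using assms(1) unfolding opens_amb_def by blast
  have "fn C = insert k (fn B)" using scong_fn[OF op(2)] by simp
  then show ?thesis
    using op assms(2) unfolding opens_amb_def
    by (intro exI[of _ k] exI[of _ "j # A"]) (auto intro: sc_res)
qed

lemma opens_amb_Res_thread:
  assumes "opens_amb X C Q" and "j \<notin> fn X"
  shows "opens_amb X (Res j C) (Res j Q)"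
proof -
  obtain k A P1 P2 B where op: "scong X (resl A (Par (Amb k P1) P2))" "scong C (Pre (Open k) B)"
      "scong Q (resl A (Par (Par P1 B) P2))" "k \<notin> set A" "set A \<inter> fn B = {}"
      "j \<notin> set A"
    using opens_amb_fresh[OF assms(1), of "{j}"] by auto
  have fn_X: "fn X = insert k (fn P1 \<union> fn P2) - set A" using scong_fn[OF op(1)] op(4) by simp
  then have "j \<noteq> k" "j \<notin> fn P1" "j \<notin> fn P2" using assms(2) op(6) by auto
  have "scong (Res j C) (Res j (Pre (Open k) B))" using op(2) by (rule sc_res)
  also have "scong \<dots> (Pre (Open k) (Res j B))" using \<open>j \<noteq> k\<close> by (intro sc_res_pre) simp
  finally have "scong (Res j C) (Pre (Open k) (Res j B))" .
  moreover have "scong (Res j Q) (resl A (Par (Par P1 (Res j B)) P2))"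
  proof -
    have "scong (Res j Q) (resl A (Res j (Par (Par P1 B) P2)))"
      using op(3,6) by (meson Res_resl_commute sc_res sc_trans)
    also have "scong \<dots> (resl A (Par (Par P1 (Res j B)) P2))"
      using \<open>j \<notin> fn P1\<close> \<open>j \<notin> fn P2\<close>
      by (meson resl_cong sc_parL sc_res_par sc_res_par' sc_trans)
    finally show ?thesis .
  qed
  moreover have "set A \<inter> fn (Res j B) = {}" using op(5) by auto
  ultimately show ?thesis
    using op(1,4) unfolding opens_amb_def by blast
qed

lemma opens_amb_Par:
  assumes "opens_amb X C Q"
  shows "opens_amb (Par X R) C (Par Q R)"
proof -
  obtain k A P1 P2 B where op: "scong X (resl A (Par (Amb k P1) P2))" "scong C (Pre (Open k) B)"
      "scong Q (resl A (Par (Par P1 B) P2))" "k \<notin> set A" "set A \<inter> fn B = {}" "set A \<inter> fn R = {}"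
    using opens_amb_fresh[OF assms, of "fn R"] by auto
  have "scong (Par X R) (resl A (Par (Amb k P1) (Par P2 R)))"
    using op(1,6) by (meson resl_cong resl_par_extrude sc_parL sc_par_assoc sc_trans)
  moreover have "scong (Par Q R) (resl A (Par (Par P1 B) (Par P2 R)))"
    using op(3,6) by (meson resl_cong resl_par_extrude sc_parL sc_par_assoc sc_trans)
  ultimately show ?thesis
    using op unfolding opens_amb_def by blast
qed

lemma opens_amb_garbage:
  assumes "opens_amb X C Q"
  shows "garbage Q = garbage X + garbage C"
proof -
  obtain k A P1 P2 B where op: "scong X (resl A (Par (Amb k P1) P2))" "scong C (Pre (Open k) B)"
      "scong Q (resl A (Par (Par P1 B) P2))" "k \<notin> set A" "set A \<inter> fn B = {}"
    using assms unfolding opens_amb_def by blast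
  have "garbage (resl A (Par (Amb k P1) P2)) + garbage (Par (Par P1 B) P2) =
        garbage (resl A (Par (Par P1 B) P2)) + garbage (Par (Amb k P1) P2)"
    using op(4,5) by (intro garbage_resl_shift) auto
  then show ?thesis using op(1-3)[THEN scong_counts] by simp
qed

lemma rstep_opens_amb:
  "rstep P Q \<Longrightarrow> thread_split P X C \<Longrightarrow> amb_threads C = 0 \<Longrightarrow> m \<notin> fn X \<Longrightarrow>
     m \<notin> unguarded_ambs P \<Longrightarrow> m \<in> top_ambs Q \<Longrightarrow> opens_amb X C Q"
proof (induction arbitrary: X C rule: rstep.induct)
  case (rstep_open k P Q)
  from rstep_open.prems(1) show ?case
  proof (cases rule: thread_split_Par_cases)
    case (left X1)
    then show ?thesis using thread_split_Pre[OF left(2)] opens_amb_redex by auto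
  next
    case (right X1)
    then show ?thesis using thread_split_Amb rstep_open.prems by fastforce
  qed
next
  case (rstep_res P Q j)
  from rstep_res.prems(1) show ?case
  proof (cases rule: thread_split_Res_cases)
    case base
    then show ?thesis using rstep_res.prems rstep_amb_threads[OF rstep_res.hyps] by simp
  next
    case (rest X1)
    then show ?thesis using rstep_res by (auto intro: opens_amb_Res_rest)
  next
    case (thread C1)
    then show ?thesis using rstep_res by (auto intro: opens_amb_Res_thread)
  qed
next
  case (rstep_amb P Q j)
  then show ?case using thread_split_Amb by fastforce
next
  case (rstep_par P Q R)
  have m_R: "m \<notin> top_ambs R" using rstep_par.prems top_ambs_unguarded by fastforce
  from rstep_par.prems(1) show ?case
  proof (cases rule: thread_split_Par_cases)
    case (left X1)
    then show ?thesis using rstep_par m_R by (auto intro: opens_amb_Par)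
  next
    case (right X1)
    then have "m \<notin> top_ambs Q" using rstep_par.prems rstep_fn[OF rstep_par.hyps] top_ambs_fn by fastforce
    then show ?thesis using rstep_par.prems m_R by auto
  qed
qed auto

definition amb_opened :: "name \<Rightarrow> proc \<Rightarrow> proc \<Rightarrow> proc \<Rightarrow> bool" where
  "amb_opened m X C Q \<longleftrightarrow>
     (\<exists>A Z R S. scong X (resl A (Par Z (Pre (Open m) R))) \<and> scong C (Amb m S) \<and>
        scong Q (resl A (Par Z (Par R S))) \<and> m \<notin> set A \<and> set A \<inter> fn S = {})"

lemma amb_opened_redex: "amb_opened m (Par (Pre (Open m) P) Nil) (Amb m Q) (Par P Q)"
proof -
  have "scong (Par (Pre (Open m) P) Nil) (resl [] (Par Nil (Pre (Open m) P)))"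
    by (simp add: sc_par_comm)
  moreover have "scong (Par P Q) (resl [] (Par Nil (Par P Q)))"
    by (simp add: sc_sym[OF sc_nil_par])
  ultimately show ?thesis unfolding amb_opened_def using sc_refl by fastforce
qed

lemma amb_opened_fresh:
  assumes "amb_opened m X C Q" and "finite F"
  shows "\<exists>A Z R S. scong X (resl A (Par Z (Pre (Open m) R))) \<and> scong C (Amb m S) \<and>
           scong Q (resl A (Par Z (Par R S))) \<and> m \<notin> set A \<and> set A \<inter> fn S = {} \<and>
           set A \<inter> F = {}"
proof -
  obtain A Z R S where op: "scong X (resl A (Par Z (Pre (Open m) R)))" "scong C (Amb m S)"
      "scong Q (resl A (Par Z (Par R S)))" "m \<notin> set A" "set A \<inter> fn S = {}"
    using assms(1) unfolding amb_opened_def by blast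
  define F' where "F' = F \<union> fn (Par Z (Pre (Open m) R)) \<union> fn S"
  obtain A' ps where ren: "set A' \<inter> F' = {}"
      "\<forall>D. fn D \<subseteq> F' \<longrightarrow> scong (resl A D) (resl A' (perm ps D))" "\<forall>k\<in>F' - set A. perm_fixes ps k"
    using resl_rename_away[of F' A] assms(2) by (auto simp: F'_def)
  have "scong (resl A (Par Z (Pre (Open m) R))) (resl A' (perm ps (Par Z (Pre (Open m) R))))"
    "perm_fixes ps m"
    using ren(2)[rule_format, of "Par Z (Pre (Open m) R)"] ren(3) op(4) by (auto simp: F'_def)
  then have "scong X (resl A' (Par (perm ps Z) (Pre (Open m) (perm ps R))))"
    using op(1) by (metis perm_Open perm_Par sc_trans)
  moreover have "scong Q (resl A' (Par (perm ps Z) (Par (perm ps R) S)))"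
  proof -
    have "fn (Par Z (Par R S)) \<subseteq> F'" by (auto simp: F'_def)
    then have "scong Q (resl A' (perm ps (Par Z (Par R S))))"
      using sc_trans[OF op(3) ren(2)[rule_format]] by blast
    moreover have "scong (perm ps S) S"
      using ren(3) op(5) by (intro perm_fixed_scong) (auto simp: F'_def)
    ultimately show ?thesis
      by (simp add: sc_trans[OF _ resl_cong] sc_parR)
  qed
  moreover have "m \<notin> set A'" "set A' \<inter> fn S = {}" "set A' \<inter> F = {}"
    using ren(1) by (auto simp: F'_def)
  ultimately show ?thesis using op(2) by blast
qed

lemma amb_opened_Res_rest:
  assumes "amb_opened m X C Q" and "j \<notin> fn C"
  shows "amb_opened m (Res j X) C (Res j Q)"
proof -
  obtain A Z R S where op: "scong X (resl A (Par Z (Pre (Open m) R)))" "scong C (Amb m S)"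
      "scong Q (resl A (Par Z (Par R S)))" "m \<notin> set A" "set A \<inter> fn S = {}"
    using assms(1) unfolding amb_opened_def by blast
  have "fn C = insert m (fn S)" using scong_fn[OF op(2)] by simp
  then show ?thesis
    using op assms(2) unfolding amb_opened_def
    by (intro exI[of _ "j # A"]) (auto intro: sc_res)
qed

lemma amb_opened_Res_thread:
  assumes "amb_opened m X C Q" and "j \<notin> fn X" and "j \<noteq> m"
  shows "amb_opened m X (Res j C) (Res j Q)"
proof -
  obtain A Z R S where op: "scong X (resl A (Par Z (Pre (Open m) R)))" "scong C (Amb m S)"
      "scong Q (resl A (Par Z (Par R S)))" "m \<notin> set A" "set A \<inter> fn S = {}"
      "j \<notin> set A"
    using amb_opened_fresh[OF assms(1), of "{j}"] by auto
  have "fn X = fn Z \<union> insert m (fn R) - set A" using scong_fn[OF op(1)] by auto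
  then have "j \<notin> fn Z" "j \<notin> fn R" using assms(2) op(6) by auto
  have "scong (Res j C) (Amb m (Res j S))"
    using op(2) assms(3) by (meson sc_res sc_res_amb sc_trans)
  moreover have "scong (Res j Q) (resl A (Par Z (Par R (Res j S))))"
  proof -
    have "scong (Res j Q) (resl A (Res j (Par Z (Par R S))))"
      using op(3,6) by (meson Res_resl_commute sc_res sc_trans)
    also have "scong \<dots> (resl A (Par Z (Par R (Res j S))))"
      using \<open>j \<notin> fn Z\<close> \<open>j \<notin> fn R\<close>
      by (meson resl_cong sc_parR sc_res_par sc_trans)
    finally show ?thesis .
  qed
  moreover have "set A \<inter> fn (Res j S) = {}" using op(5) by auto
  ultimately show ?thesis
    using op(1,4) unfolding amb_opened_def by blast
qed

lemma amb_opened_Par: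
  assumes "amb_opened m X C Q"
  shows "amb_opened m (Par X R') C (Par Q R')"
proof -
  obtain A Z R S where op: "scong X (resl A (Par Z (Pre (Open m) R)))" "scong C (Amb m S)"
      "scong Q (resl A (Par Z (Par R S)))" "m \<notin> set A" "set A \<inter> fn S = {}" "set A \<inter> fn R' = {}"
    using amb_opened_fresh[OF assms, of "fn R'"] by auto
  have "scong (Par X R') (resl A (Par (Par Z R') (Pre (Open m) R)))"
    using op(1,6) by (meson resl_cong resl_par_extrude sc_parL sc_par_right_commute sc_trans)
  moreover have "scong (Par Q R') (resl A (Par (Par Z R') (Par R S)))"
    using op(3,6) by (meson resl_cong resl_par_extrude sc_parL sc_par_right_commute sc_trans)
  ultimately show ?thesis
    using op unfolding amb_opened_def by blast
qed

lemma amb_opened_garbage: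
  assumes "amb_opened m X C Q"
  shows "garbage Q = garbage X + garbage C"
proof -
  obtain A Z R S where op: "scong X (resl A (Par Z (Pre (Open m) R)))" "scong C (Amb m S)"
      "scong Q (resl A (Par Z (Par R S)))" "m \<notin> set A" "set A \<inter> fn S = {}"
    using assms unfolding amb_opened_def by blast
  have "garbage (resl A (Par Z (Pre (Open m) R))) + garbage (Par Z (Par R S)) =
        garbage (resl A (Par Z (Par R S))) + garbage (Par Z (Pre (Open m) R))"
    using op(4,5) by (intro garbage_resl_shift) auto
  then show ?thesis using op(1-3)[THEN scong_counts] by simp
qed

lemma rstep_amb_opened:
  "rstep P Q \<Longrightarrow> thread_split P X C \<Longrightarrow> top_ambs C = {m} \<Longrightarrow> weight C = 1 \<Longrightarrow>
     m \<notin> top_ambs Q \<Longrightarrow> amb_opened m X C Q"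
proof (induction arbitrary: X C rule: rstep.induct)
  case (rstep_in n m' P Q R)
  from rstep_in.prems(1) show ?case
    by (cases rule: thread_split_Par_cases) (use thread_split_Amb rstep_in.prems in fastforce)+
next
  case (rstep_out m' n P Q R)
  then show ?case using thread_split_Amb by fastforce
next
  case (rstep_open k P Q)
  from rstep_open.prems(1) show ?case
  proof (cases rule: thread_split_Par_cases)
    case (left X1)
    then show ?thesis using thread_split_Pre rstep_open.prems by fastforce
  next
    case (right X1)
    then show ?thesis using thread_split_Amb[OF right(2)] rstep_open.prems amb_opened_redex by auto
  qed
next
  case (rstep_res P Q j)
  from rstep_res.prems(1) show ?case
  proof (cases rule: thread_split_Res_cases)
    case base
    then show ?thesis using rstep_res.prems rstep_weight[OF rstep_res.hyps] by simp
  next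
    case (rest X1)
    then have "j \<noteq> m" using rstep_res.prems top_ambs_fn by fastforce
    then show ?thesis using rstep_res rest by (auto intro: amb_opened_Res_rest)
  next
    case (thread C1)
    then have "top_ambs C1 = {m}" "weight C1 = 1"
      using rstep_res.prems top_ambs_weight_1[of C1 m] by auto
    then show ?thesis using rstep_res thread by (auto intro: amb_opened_Res_thread)
  qed
next
  case (rstep_amb P Q j)
  then show ?case using thread_split_Amb rstep_weight by fastforce
next
  case (rstep_par P Q R)
  from rstep_par.prems(1) show ?case
  proof (cases rule: thread_split_Par_cases)
    case (left X1)
    then show ?thesis using rstep_par by (auto intro: amb_opened_Par)
  next
    case (right X1)
    then have "m \<in> top_ambs R"
      using thread_split_sound[OF right(2)] scong_top_ambs rstep_par.prems by fastforce
    then show ?thesis using rstep_par.prems by auto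
  qed
qed

lemma thread_split_resl_prefix:
  assumes "thread_split (resl A (Par Z (Pre M R))) X C" and "m \<in> fn (Pre M R)" and "m \<notin> set A"
    and "set A \<inter> F = {}" and "m \<notin> fn X"
  shows "\<exists>AC Xr. set AC \<subseteq> set A \<and> pcong X Xr \<and> pcong C (resl AC (Pre M R)) \<and>
           (\<forall>L. fn L \<subseteq> fn (Pre M R) \<union> F \<longrightarrow> scong (resl A (Par Z L)) (Par Xr (resl AC L)))"
  using assms
proof (induction A arbitrary: X C)
  case Nil
  from Nil.prems(1) have "thread_split (Par Z (Pre M R)) X C" by simp
  then show ?case
  proof (cases rule: thread_split_Par_cases)
    case (left X1)
    then show ?thesis using Nil.prems by auto
  next
    case (right X1)
    then have "X = Par Z Nil" "C = Pre M R" using thread_split_Pre by auto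
    then show ?thesis
      by (intro exI[of _ "[]"] exI[of _ "Par Z Nil"]) (simp add: sc_parL sc_par_nil')
  qed
next
  case (Cons a A)
  from Cons.prems(1) have "thread_split (Res a (resl A (Par Z (Pre M R)))) X C" by simp
  then show ?case
  proof (cases rule: thread_split_Res_cases)
    case base
    then have "weight Z = 0" by (simp add: threads_0_weight)
    then have Z: "fn Z = {}" "pcong X Z" using base by (auto simp: weight_0_fn pcong_sym pcong_weight_0)
    have "scong (resl (a # A) (Par Z L)) (Par Z (resl (a # A) L))" for L
      using Z(1) by (intro sc_sym[OF resl_par_extrude']) auto
    moreover have "pcong C (resl (a # A) (Pre M R))"
      using base \<open>weight Z = 0\<close> calculation[of "Pre M R"] by (auto intro: pcong_par_weightless' scong_pcong_trans)
    ultimately show ?thesis using Z by (intro exI[of _ "a # A"] exI[of _ Z]) auto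
  next
    case (rest X1)
    then have "m \<notin> fn X1" using Cons.prems by auto
    then obtain AC Xr where IH: "set AC \<subseteq> set A" "pcong X1 Xr" "pcong C (resl AC (Pre M R))"
        "\<forall>L. fn L \<subseteq> fn (Pre M R) \<union> F \<longrightarrow> scong (resl A (Par Z L)) (Par Xr (resl AC L))"
      using Cons.IH[OF rest(2)] Cons.prems by auto
    have a: "a \<notin> fn (Pre M R) - set AC" "a \<notin> F"
      using pcong_fn[OF IH(3)] rest Cons.prems(4) by auto
    have "scong (resl (a # A) (Par Z L)) (Par (Res a Xr) (resl AC L))"
      if "fn L \<subseteq> fn (Pre M R) \<union> F" for L
    proof -
      have "scong (resl (a # A) (Par Z L)) (Res a (Par Xr (resl AC L)))"
        using IH(4) that by (simp add: sc_res)
      also have "scong \<dots> (Par (Res a Xr) (resl AC L))"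
        using a that by (intro sc_res_par') auto
      finally show ?thesis .
    qed
    then show ?thesis using IH rest by (intro exI[of _ AC] exI[of _ "Res a Xr"]) (auto intro: pcong_Res)
  next
    case (thread C1)
    obtain AC Xr where IH: "set AC \<subseteq> set A" "pcong X Xr" "pcong C1 (resl AC (Pre M R))"
        "\<forall>L. fn L \<subseteq> fn (Pre M R) \<union> F \<longrightarrow> scong (resl A (Par Z L)) (Par Xr (resl AC L))"
      using Cons.IH[OF thread(2)] Cons.prems by auto
    have "a \<notin> fn Xr" using pcong_fn[OF IH(2)] thread by auto
    then have "scong (resl (a # A) (Par Z L)) (Par Xr (resl (a # AC) L))"
      if "fn L \<subseteq> fn (Pre M R) \<union> F" for L
      using IH(4) that by (simp add: sc_trans[OF sc_res sc_res_par])
    moreover have "pcong C (resl (a # AC) (Pre M R))" using thread IH(3) by (simp add: pcong_Res)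
    ultimately show ?thesis using IH by (intro exI[of _ "a # AC"] exI[of _ Xr]) auto
  qed
qed


section \<open>The co-open transition\<close>

definition open_probe :: "name \<Rightarrow> name \<Rightarrow> proc \<Rightarrow> proc" where
  "open_probe n m T = Pre (Open n) (Par (Amb m Nil) (Pre (Open m) T))"

lemma Popen_open_probe:
  "Popen n T1 X Y \<longleftrightarrow>
     (\<exists>P'' m. m \<notin> fn X \<and> barb P'' m \<and> red (Par X (open_probe n m T1)) P'' \<and> red P'' Y \<and>
        \<not> barb Y m)"
  by (simp add: Popen_def open_probe_def)

lemma red_open_probe:
  assumes "n \<notin> set A" and "m \<notin> set A" and "set A \<inter> fn T = {}"
  shows "red (Par (resl A (Par (Amb n P1) P2)) (open_probe n m T))
           (resl A (Par (Amb m Nil) (Par (Pre (Open m) T) (Par P1 P2))))"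
proof -
  have "scong (Par (resl A (Par (Amb n P1) P2)) (open_probe n m T))
      (resl A (Par (Par (Amb n P1) P2) (open_probe n m T)))"
    using assms by (intro resl_par_extrude) (auto simp: open_probe_def)
  also have "scong \<dots> (resl A (Par (Par (open_probe n m T) (Amb n P1)) P2))"
    by (intro resl_cong) (meson sc_par_comm sc_parL sc_par_right_commute sc_trans)
  finally have "scong (Par (resl A (Par (Amb n P1) P2)) (open_probe n m T))
      (resl A (Par (Par (open_probe n m T) (Amb n P1)) P2))" .
  moreover have "red (resl A (Par (Par (open_probe n m T) (Amb n P1)) P2))
      (resl A (Par (Par (Par (Amb m Nil) (Pre (Open m) T)) P1) P2))"
    unfolding open_probe_def by (intro red_resl red_par red_open)
  moreover have "scong (resl A (Par (Par (Par (Amb m Nil) (Pre (Open m) T)) P1) P2))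
      (resl A (Par (Amb m Nil) (Par (Pre (Open m) T) (Par P1 P2))))"
    by (intro resl_cong) (meson sc_par_assoc sc_trans)
  ultimately show ?thesis using sc_refl red_scong by blast
qed

lemma red_empty_amb:
  "red (resl A (Par (Amb m Nil) (Par (Pre (Open m) T) V))) (resl A (Par T V))"
proof -
  have "scong (resl A (Par (Amb m Nil) (Par (Pre (Open m) T) V)))
      (resl A (Par (Par (Pre (Open m) T) (Amb m Nil)) V))"
    by (intro resl_cong) (meson sc_par_assoc' sc_par_comm sc_parL sc_trans)
  moreover have "red (resl A (Par (Par (Pre (Open m) T) (Amb m Nil)) V)) (resl A (Par (Par T Nil) V))"
    by (intro red_resl red_par red_open)
  moreover have "scong (resl A (Par (Par T Nil) V)) (resl A (Par T V))"
    by (intro resl_cong sc_parL sc_par_nil)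
  ultimately show ?thesis by (rule red_scong)
qed

lemma coopen_MI_open_probe:
  assumes "coopen_MI n T1 P P'" and "finite F"
  obtains m P'' where "m \<notin> F" "m \<notin> fn P" "red (Par P (open_probe n m T1)) P''" "barb P'' m"
    "red P'' P'" "\<not> barb P' m"
proof -
  obtain A P1 P2 where P: "scong P (resl A (Par (Amb n P1) P2))" "n \<notin> set A"
      "set A \<inter> fn T1 = {}" "scong P' (resl A (Par (Par P1 T1) P2))"
    using assms(1) unfolding coopen_MI_def by blast
  obtain m where m: "m \<notin> F \<union> fn P \<union> fn T1 \<union> set A \<union> {n}"
    using fresh_name assms(2) by (metis finite_Un finite_fn finite_insert finite_set insert_is_Un)
  define P'' where "P'' = resl A (Par (Amb m Nil) (Par (Pre (Open m) T1) (Par P1 P2)))"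
  have "red (Par P (open_probe n m T1)) P''"
  proof (rule red_scong[OF sc_parL[OF P(1)] _ sc_refl])
    show "red (Par (resl A (Par (Amb n P1) P2)) (open_probe n m T1)) P''"
      unfolding P''_def using P(2,3) m by (intro red_open_probe) auto
  qed
  moreover have "barb P'' m"
    unfolding P''_def barb_def using m by (blast intro: sc_refl)
  moreover have "red P'' P'"
  proof -
    have "scong (resl A (Par T1 (Par P1 P2))) P'"
      using P(4) by (meson resl_cong sc_par_assoc' sc_par_comm sc_parL sc_sym sc_trans)
    then show ?thesis unfolding P''_def by (rule red_scong[OF sc_refl red_empty_amb])
  qed
  moreover have "\<not> barb P' m"
    using scong_fn[OF P(1)] scong_fn[OF P(4)] m top_ambs_fn by (fastforce simp: barb_top_ambs)
  ultimately show ?thesis using that m by blast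
qed

lemma red_open_probe_inv:
  assumes red: "red (Par X0 (open_probe n m T1)) P''" and "barb P'' m" and "m \<notin> fn X0"
  shows "\<exists>A P1 P2 B. pcong X0 (resl A (Par (Amb n P1) P2)) \<and>
           pcong (Par (Amb m Nil) (Pre (Open m) T1)) B \<and> scong P'' (resl A (Par (Par P1 B) P2)) \<and>
           n \<notin> set A \<and> set A \<inter> fn B = {} \<and> garbage P'' = garbage X0 + garbage T1"
proof -
  define G where "G = open_probe n m T1"
  have "thread_split (Par X0 G) (Par X0 Nil) G"
    by (rule ts_parR, rule ts_base) (auto simp: G_def open_probe_def)
  then obtain P0 Q0 X C where step: "scong (Par X0 G) P0" "rstep P0 Q0" "scong Q0 P''"
      "thread_split P0 X C" "pcong (Par X0 Nil) X" "pcong G C"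
    using red_thread_split[OF red[folded G_def]] by blast
  have "opens_amb X C Q0"
  proof (rule rstep_opens_amb[OF step(2,4)])
    show "amb_threads C = 0"
      using pcong_counts[OF step(6)] by (simp add: G_def open_probe_def)
    show "m \<notin> fn X"
      using pcong_fn[OF step(5)] assms(3) by simp
    show "m \<notin> unguarded_ambs P0"
      using scong_unguarded_ambs[OF step(1)] unguarded_ambs_fn[of X0] assms(3)
      by (auto simp: G_def open_probe_def)
    show "m \<in> top_ambs Q0"
      using assms(2) scong_top_ambs[OF step(3)] by (simp add: barb_top_ambs)
  qed
  then obtain k A P1 P2 B where op: "scong X (resl A (Par (Amb k P1) P2))"
      "scong C (Pre (Open k) B)" "scong Q0 (resl A (Par (Par P1 B) P2))" "k \<notin> set A"
      "set A \<inter> fn B = {}"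
    unfolding opens_amb_def by blast
  have "pcong G (Pre (Open k) B)" using step(6) op(2) by (rule pcong_scong_trans)
  then have "k = n" and "pcong (Par (Amb m Nil) (Pre (Open m) T1)) B"
    using Pre_scong_Pre by (auto simp: pcong_def G_def open_probe_def)
  moreover have "pcong X0 (resl A (Par (Amb k P1) P2))"
    using pcong_trans[OF pcong_sym[OF pcong_par_weightless] step(5)] op(1)
    by (auto intro: pcong_scong_trans)
  moreover have "garbage P'' = garbage X0 + garbage T1"
    using step(1,3)[THEN scong_counts] opens_amb_garbage[OF \<open>opens_amb X C Q0\<close>]
      thread_split_garbage[OF step(4)] op(2)[THEN scong_counts] by (simp add: G_def open_probe_def)
  ultimately show ?thesis
    using sc_trans[OF sc_sym[OF step(3)] op(3)] op(4,5) by blast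
qed

lemma open_probe_first_step:
  assumes "red (Par X0 (open_probe n m T1)) P''" and "barb P'' m" and "m \<notin> fn X0"
  shows "\<exists>A P1 P2 W. pcong X0 (resl A (Par (Amb n P1) P2)) \<and> n \<notin> set A \<and> set A \<inter> fn T1 = {} \<and>
           pcong W (resl A (Par P1 P2)) \<and> m \<notin> fn W \<and>
           scong P'' (Par (Amb m Nil) (Par (Pre (Open m) (prune T1)) W)) \<and>
           garbage P'' = garbage X0 + garbage T1"
proof -
  obtain A P1 P2 B where X0: "pcong X0 (resl A (Par (Amb n P1) P2))" and
      B: "pcong (Par (Amb m Nil) (Pre (Open m) T1)) B" and P'': "scong P'' (resl A (Par (Par P1 B) P2))"
      and A: "n \<notin> set A" "set A \<inter> fn B = {}" and garbage: "garbage P'' = garbage X0 + garbage T1"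
    using red_open_probe_inv[OF assms] by blast
  define V where "V = resl A (Par P1 P2)"
  define W where "W = Par (vacuous (garbage B)) V"
  have fn_B: "fn B = insert m (fn T1)" using pcong_fn[OF B] by auto
  have "m \<notin> fn W"
    using pcong_fn[OF X0] assms(3) A(2) fn_B by (auto simp: W_def V_def)
  moreover have "scong P'' (Par (Amb m Nil) (Par (Pre (Open m) (prune T1)) W))"
  proof -
    have "scong P'' (resl A (Par B (Par P1 P2)))"
      using P'' by (meson resl_cong sc_par_assoc sc_par_comm sc_parL sc_trans)
    also have "scong \<dots> (Par B V)"
      unfolding V_def using A(2) by (intro sc_sym[OF resl_par_extrude']) auto
    also have "scong \<dots> (Par (Par (prune B) (vacuous (garbage B))) V)"
      by (rule sc_parL, rule scong_prune_vacuous)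
    also have "scong \<dots> (Par (Par (Par (Amb m Nil) (Pre (Open m) (prune T1))) (vacuous (garbage B))) V)"
      using B by (simp add: pcong_def sc_sym sc_parL)
    also have "scong \<dots> (Par (Amb m Nil) (Par (Pre (Open m) (prune T1)) W))"
      unfolding W_def by (meson sc_par_assoc sc_trans)
    finally show ?thesis .
  qed
  moreover have "pcong W V" by (simp add: W_def pcong_par_weightless')
  ultimately show ?thesis
    using X0 A fn_B garbage unfolding V_def by blast
qed

lemma red_empty_amb_inv:
  assumes red: "red (Par (Amb m Nil) X) Y" and "\<not> barb Y m"
  shows "\<exists>A Z R S. pcong X (resl A (Par Z (Pre (Open m) R))) \<and> weight S = 0 \<and>
           scong Y (resl A (Par Z (Par R S))) \<and> m \<notin> set A \<and> set A \<inter> fn S = {} \<and>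
           garbage Y = garbage X"
proof -
  have "thread_split (Par (Amb m Nil) X) (Par Nil X) (Amb m Nil)"
    by (rule ts_parL, rule ts_base) auto
  then obtain P0 Q0 X0 C0 where step: "scong (Par (Amb m Nil) X) P0" "rstep P0 Q0" "scong Q0 Y"
      "thread_split P0 X0 C0" "pcong (Par Nil X) X0" "pcong (Amb m Nil) C0"
    using red_thread_split[OF red] by blast
  have "amb_opened m X0 C0 Q0"
  proof (rule rstep_amb_opened[OF step(2,4)])
    show "top_ambs C0 = {m}" "weight C0 = 1"
      using pcong_top_ambs[OF step(6)] pcong_counts[OF step(6)] by auto
    show "m \<notin> top_ambs Q0"
      using assms(2) scong_top_ambs[OF step(3)] by (simp add: barb_top_ambs)
  qed
  then obtain A Z R S where op: "scong X0 (resl A (Par Z (Pre (Open m) R)))" "scong C0 (Amb m S)"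
      "scong Q0 (resl A (Par Z (Par R S)))" "m \<notin> set A" "set A \<inter> fn S = {}"
    unfolding amb_opened_def by blast
  have "weight S = 0"
    using pcong_counts[OF step(6)] scong_counts[OF op(2)] by simp
  moreover have "pcong X (resl A (Par Z (Pre (Open m) R)))"
  proof -
    have "pcong X (Par Nil X)" by (simp add: pcong_sym pcong_par_weightless')
    also have "pcong \<dots> X0" by (fact step(5))
    also have "scong \<dots> (resl A (Par Z (Pre (Open m) R)))" by (fact op(1))
    finally show ?thesis .
  qed
  moreover have "garbage Y = garbage X"
    using step(1,3)[THEN scong_counts] amb_opened_garbage[OF \<open>amb_opened m X0 C0 Q0\<close>]
      thread_split_garbage[OF step(4)] by simp
  ultimately show ?thesis
    using op(3-5) sc_trans[OF sc_sym[OF step(3)] op(3)] by blast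
qed

lemma pcong_resl_open_replace:
  assumes "pcong (resl A (Par Z (Pre (Open m) R))) (Par (Pre (Open m) T) W)"
    and "m \<notin> fn W" and "m \<notin> set A" and "set A \<inter> fn S = {}"
  shows "pcong (resl A (Par Z (Par R S))) (Par W (Par T S))"
proof -
  obtain X3 C3 where split: "thread_split (resl A (Par Z (Pre (Open m) R))) X3 C3" "pcong X3 W"
      "pcong C3 (Pre (Open m) T)"
    using pcong_thread_split[OF assms(1)] by auto
  have "m \<notin> fn X3" using pcong_fn[OF split(2)] assms(2) by simp
  then obtain AC Xr where AC: "set AC \<subseteq> set A" "pcong X3 Xr"
      "pcong C3 (resl AC (Pre (Open m) R))"
      "\<forall>L. fn L \<subseteq> fn (Pre (Open m) R) \<union> fn S \<longrightarrow> scong (resl A (Par Z L)) (Par Xr (resl AC L))"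
    using thread_split_resl_prefix[OF split(1) _ assms(3,4)] by auto
  have "m \<notin> set AC" using AC(1) assms(3) by auto
  then have "scong (resl AC (Pre (Open m) R)) (Pre (Open m) (resl AC R))"
    by (intro resl_Pre) auto
  then have "pcong (Pre (Open m) T) (Pre (Open m) (resl AC R))"
    using split(3) AC(3) by (meson pcong_sym pcong_trans pcong_scong_trans)
  then have T: "pcong T (resl AC R)"
    using Pre_scong_Pre by (auto simp: pcong_def)
  have "scong (resl A (Par Z (Par R S))) (Par Xr (resl AC (Par R S)))"
    using AC(4)[rule_format, of "Par R S"] by auto
  also have "scong \<dots> (Par Xr (Par (resl AC R) S))"
    using AC(1) assms(4) by (intro sc_parR sc_sym[OF resl_par_extrude]) auto
  also have "pcong \<dots> (Par W (Par T S))"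
    using split(2) AC(2) T by (meson pcong_Par pcong_refl pcong_sym pcong_trans)
  finally show ?thesis .
qed

lemma open_probe_second_step:
  assumes "red (Par (Amb m Nil) (Par (Pre (Open m) T) W)) Y" and "\<not> barb Y m" and "m \<notin> fn W"
  shows "pcong Y (Par W T) \<and> garbage Y = garbage T + garbage W"
proof -
  obtain A Z R S where opened: "pcong (Par (Pre (Open m) T) W) (resl A (Par Z (Pre (Open m) R)))"
      "weight S = 0" "scong Y (resl A (Par Z (Par R S)))" "m \<notin> set A" "set A \<inter> fn S = {}"
      "garbage Y = garbage (Par (Pre (Open m) T) W)"
    using red_empty_amb_inv[OF assms(1,2)] by blast
  have "pcong Y (Par W (Par T S))"
    using opened(3) pcong_resl_open_replace[OF pcong_sym[OF opened(1)] assms(3) opened(4,5)]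
    by (rule scong_pcong_trans)
  also have "pcong \<dots> (Par W T)"
    using opened(2) by (simp add: pcong_Par pcong_par_weightless)
  finally show ?thesis using opened(6) by simp
qed

lemma coopen_MI_of_pcong:
  assumes X0: "pcong X0 (resl A (Par (Amb n P1) P2))" and Y: "pcong Y (resl A (Par (Par P1 T1) P2))"
    and garbage: "garbage Y = garbage X0 + garbage T1"
    and "n \<notin> set A" and "set A \<inter> fn T1 = {}"
  shows "coopen_MI n T1 X0 Y"
proof -
  define A' where "A' = filter (\<lambda>a. a \<in> fn P1 \<union> fn P2) (remdups A)"
  define Q1 where "Q1 = prune P1"
  define Q2 where "Q2 = Par (prune P2) (vacuous (garbage X0))"
  have A': "set A' \<subseteq> set A" "set A' \<subseteq> fn P1 \<union> fn P2" "distinct A'"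
    by (auto simp: A'_def)
  have "pcong P2 Q2"
    unfolding Q2_def by (meson pcong_par_weightless pcong_prune pcong_sym pcong_trans vacuous_simps(4))
  then have Q: "fn Q1 = fn P1" "fn Q2 = fn P2" "pcong P1 Q1" "pcong P2 Q2"
    by (simp_all add: Q1_def Q2_def pcong_sym pcong_prune)
  have "scong X0 (resl A' (Par (Amb n Q1) Q2))"
  proof (rule pcong_garbage_scong)
    have "pcong X0 (resl A (Par (Amb n P1) P2))" by (fact X0)
    also have "pcong \<dots> (resl A' (Par (Amb n P1) P2))"
      unfolding A'_def using assms(4) by (intro pcong_resl_filter) auto
    also have "pcong \<dots> (resl A' (Par (Amb n Q1) Q2))"
      using Q by (intro pcong_resl pcong_Par pcong_Amb)
    finally show "pcong X0 (resl A' (Par (Amb n Q1) Q2))" .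
    have "garbage (resl A' (Par (Amb n Q1) Q2)) = garbage (Par (Amb n Q1) Q2)"
      using A' Q by (intro garbage_resl_useful) auto
    then show "garbage X0 = garbage (resl A' (Par (Amb n Q1) Q2))"
      by (simp add: Q1_def Q2_def)
  qed
  moreover have "scong Y (resl A' (Par (Par Q1 T1) Q2))"
  proof (rule pcong_garbage_scong)
    have "pcong Y (resl A (Par (Par P1 T1) P2))" by (fact Y)
    also have "pcong \<dots> (resl A' (Par (Par P1 T1) P2))"
      unfolding A'_def using assms(5) by (intro pcong_resl_filter) auto
    also have "pcong \<dots> (resl A' (Par (Par Q1 T1) Q2))"
      using Q by (intro pcong_resl pcong_Par) auto
    finally show "pcong Y (resl A' (Par (Par Q1 T1) Q2))" .
    have "garbage (resl A' (Par (Par Q1 T1) Q2)) = garbage (Par (Par Q1 T1) Q2)"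
      using A' Q by (intro garbage_resl_useful) auto
    then show "garbage Y = garbage (resl A' (Par (Par Q1 T1) Q2))"
      using garbage by (simp add: Q1_def Q2_def)
  qed
  moreover have "n \<notin> set A'" "set A' \<inter> fn T1 = {}" using A'(1) assms(4,5) by auto
  ultimately show ?thesis unfolding coopen_MI_def by blast
qed

lemma Popen_coopen_MI:
  assumes "Popen n T1 X0 Y"
  shows "coopen_MI n T1 X0 Y"
proof -
  obtain P'' m where m: "m \<notin> fn X0" and first: "red (Par X0 (open_probe n m T1)) P''" "barb P'' m"
    and second: "red P'' Y" "\<not> barb Y m"
    using assms unfolding Popen_open_probe by blast
  obtain A P1 P2 W where X0: "pcong X0 (resl A (Par (Amb n P1) P2))" "n \<notin> set A"
      "set A \<inter> fn T1 = {}" "pcong W (resl A (Par P1 P2))" "m \<notin> fn W"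
      and P'': "scong P'' (Par (Amb m Nil) (Par (Pre (Open m) (prune T1)) W))"
      "garbage P'' = garbage X0 + garbage T1"
    using open_probe_first_step[OF first m] by blast
  have "red (Par (Amb m Nil) (Par (Pre (Open m) (prune T1)) W)) Y"
    using second(1) P''(1) by (meson red_scong sc_refl sc_sym)
  then have Y: "pcong Y (Par W (prune T1))" "garbage Y = garbage W"
    using open_probe_second_step second(2) X0(5) by auto
  have "pcong Y (resl A (Par (Par P1 T1) P2))"
  proof -
    have "pcong Y (Par W (prune T1))" by (fact Y(1))
    also have "pcong \<dots> (Par (resl A (Par P1 P2)) T1)"
      using X0(4) by (simp add: pcong_Par pcong_prune)
    also have "scong \<dots> (resl A (Par (Par P1 T1) P2))"
      using X0(3) by (meson resl_cong resl_par_extrude sc_par_right_commute sc_trans)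
    finally show ?thesis .
  qed
  moreover have "garbage Y = garbage X0 + garbage T1"
    using Y(2) P'' scong_counts[OF P''(1)] by simp
  ultimately show ?thesis using coopen_MI_of_pcong X0(1-3) by blast
qed

theorem Popen_iff_coopen_MI: "Popen n T1 P P' \<longleftrightarrow> coopen_MI n T1 P P'"
  using Popen_coopen_MI coopen_MI_open_probe[of n T1 P P' "{}"]
  unfolding Popen_open_probe by blast


section \<open>Stability under barbed saturated bisimilarity\<close>

lemma bs_bisimulation_barb: "bs_bisimulation R \<Longrightarrow> R P Q \<Longrightarrow> barb P n \<Longrightarrow> barb Q n"
  unfolding bs_bisimulation_def by (metis fill.simps(1))

lemma bs_bisimulation_red:
  "bs_bisimulation R \<Longrightarrow> R P Q \<Longrightarrow> red (fill C P) P' \<Longrightarrow> \<exists>Q'. red (fill C Q) Q' \<and> R P' Q'"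
  unfolding bs_bisimulation_def by blast

lemma bs_bisimulation_sym: "bs_bisimulation R \<Longrightarrow> R P Q \<Longrightarrow> R Q P"
  unfolding bs_bisimulation_def by blast

lemma Popen_stable: "stable (Popen n T1) bs_bisim"
  unfolding stable_def
proof (intro allI impI)
  fix P Q P' assume "bs_bisim P Q" and "Popen n T1 P P'"
  then obtain R where R: "bs_bisimulation R" "R P Q" unfolding bs_bisim_def by blast
  obtain m P'' where m: "m \<notin> fn Q" "m \<notin> fn P" and P'': "red (Par P (open_probe n m T1)) P''"
      "barb P'' m" "red P'' P'" "\<not> barb P' m"
    using coopen_MI_open_probe[of n T1 P P' "fn Q"] \<open>Popen n T1 P P'\<close>
    by (auto simp: Popen_iff_coopen_MI)
  obtain Q'' where Q'': "red (Par Q (open_probe n m T1)) Q''" "R P'' Q''"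
    using bs_bisimulation_red[OF R, of "CParL Hole (open_probe n m T1)"] P''(1) by auto
  obtain Q' where Q': "red Q'' Q'" "R P' Q'"
    using bs_bisimulation_red[OF R(1) Q''(2), of Hole] P''(3) by auto
  have "barb Q'' m" using bs_bisimulation_barb[OF R(1) Q''(2) P''(2)] .
  moreover have "\<not> barb Q' m"
    using bs_bisimulation_barb[OF R(1) bs_bisimulation_sym[OF R(1) Q'(2)]] P''(4) by blast
  ultimately have "Popen n T1 Q Q'"
    unfolding Popen_open_probe using m(1) Q''(1) Q'(1) by blast
  moreover have "bs_bisim P' Q'" unfolding bs_bisim_def using R(1) Q'(2) by blast
  ultimately show "\<exists>Q'. Popen n T1 Q Q' \<and> bs_bisim P' Q'" by blast
qed

theorem mainTheorem4:
  fixes n :: name and T1 :: proc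
  shows "stable (Popen n T1) bs_bisim \<and>
         (\<forall>P P'. Popen n T1 P P' \<longleftrightarrow> coopen_MI n T1 P P')"
  using Popen_stable Popen_iff_coopen_MI by blast

end
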